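(* Let $\phi:[0,1]\to[0,1]$ be a nondecreasing continuous function such that $\phi(x)>x$ for all $x\in(0,1)$, $\phi(0)>0$ and $\phi(1-\varepsilon)=1$ for some $0<\varepsilon<1$. Let $N=N(\phi)\in\{2,3,\dots\}$ be the unique integer such that $\phi^N(x)=1$ for all $x\in[0,1]$ and $\phi^{N-1}(x_0)\neq 1$ for some $x_0\in[0,1)$. Let $V_\phi$ be the operator on $L_2[0,1]$ given by $(V_\phi f)(x)=\int_0^{\phi(x)}f(t)\,dt$. Then (1) $\sigma_p(V_\phi)\setminus\{0\}$ is finite; more precisely $\sigma_p(V_\phi)=\{0\}\cup\{\lambda_1,\dots,\lambda_N\}$ with $\lambda_n\neq0$; (2) $\sum_{n=1}^N\lambda_n=1$.
   Context: $\phi^k$ denotes the $k$-fold composition of $\phi$. $\sigma_p$ denotes the point spectrum; the nonzero eigenvalues $\lambda_1,\dots,\lambda_N$ are listed repeated according to their algebraic multiplicities. *)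

theory Defs
  imports "HOL-Analysis.Analysis"
begin

text \<open>Elements of L_2[0,1] (complex scalars) are represented by functions
  real => complex; two functions represent the same element iff they agree
  almost everywhere on [0,1].\<close>

definition L2_01 :: "(real \<Rightarrow> complex) set" where
  "L2_01 = {f. set_borel_measurable lborel {0..1} f \<and>
               set_integrable lborel {0..1} (\<lambda>x. (cmod (f x))^2)}"

definition ae01_zero :: "(real \<Rightarrow> complex) \<Rightarrow> bool" where
  "ae01_zero f \<longleftrightarrow> (AE x in lborel. x \<in> {0..1} \<longrightarrow> f x = 0)"

definition Vop :: "(real \<Rightarrow> real) \<Rightarrow> (real \<Rightarrow> complex) \<Rightarrow> real \<Rightarrow> complex" where
  "Vop \<phi> f x = (LINT t:{0..\<phi> x}|lborel. f t)"

definition point_spectrum :: "(real \<Rightarrow> real) \<Rightarrow> complex set" where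
  "point_spectrum \<phi> = {l. \<exists>f\<in>L2_01. \<not> ae01_zero f \<and>
                                 ae01_zero (\<lambda>x. Vop \<phi> f x - l * f x)}"

definition gen_eigenspace :: "(real \<Rightarrow> real) \<Rightarrow> complex \<Rightarrow> (real \<Rightarrow> complex) set" where
  "gen_eigenspace \<phi> l = {f\<in>L2_01. \<exists>k::nat.
       ae01_zero (((\<lambda>g x. Vop \<phi> g x - l * g x) ^^ k) f)}"

definition ae01_lin_indep :: "(real \<Rightarrow> complex) list \<Rightarrow> bool" where
  "ae01_lin_indep fs \<longleftrightarrow> (\<forall>c::nat \<Rightarrow> complex.
      ae01_zero (\<lambda>x. \<Sum>i<length fs. c i * (fs ! i) x) \<longrightarrow> (\<forall>i<length fs. c i = 0))"

definition has_alg_mult :: "(real \<Rightarrow> real) \<Rightarrow> complex \<Rightarrow> nat \<Rightarrow> bool" where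
  "has_alg_mult \<phi> l m \<longleftrightarrow>
     (\<exists>fs. length fs = m \<and> set fs \<subseteq> gen_eigenspace \<phi> l \<and> ae01_lin_indep fs) \<and>
     (\<forall>fs. set fs \<subseteq> gen_eigenspace \<phi> l \<and> ae01_lin_indep fs \<longrightarrow> length fs \<le> m)"

end

theory Submission
  imports Defs "Jordan_Normal_Form.Jordan_Normal_Form_Uniqueness" "Jordan_Normal_Form.Jordan_Normal_Form_Existence"
begin

text \<open>For \<open>x \<in> [0,1]\<close> write \<open>V\<^sub>\<phi> f = \<ell> f - T f\<close> with \<open>\<ell> f = \<integral>\<^sub>0\<^sup>1 f\<close> and
  \<open>(T f)(x) = \<integral>\<^bsub>\<phi>(x)\<^esub>\<^sup>1 f\<close> (\<open>tail_op\<close>). Since \<open>\<phi>\<^sup>N \<equiv> 1\<close>, the operator \<open>T\<close> is nilpotent: \<open>T\<^sup>N = 0\<close>.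
  The functions \<open>h\<^sub>k = T\<^sup>k 1\<close> (\<open>tail_fun\<close>), \<open>k < N\<close>, are linearly independent, because \<open>h\<^sub>k\<close> is positive
  exactly where \<open>\<phi>\<^sup>k < 1\<close>, and their span \<open>W\<close> is invariant under \<open>V\<^sub>\<phi>\<close>, which acts on
  coefficients by the \<open>N \<times> N\<close> matrix with first row \<open>(\<ell> h\<^sub>j)\<^sub>j\<close> minus the shift.
  For \<open>\<mu> \<noteq> 0\<close>, solving \<open>(V\<^sub>\<phi> - \<mu>) f \<in> W\<close> for \<open>f\<close> and iterating \<open>N\<close> times kills the
  \<open>T\<^sup>N f\<close> term, so every generalised eigenvector for \<open>\<mu>\<close> lies in \<open>W\<close>. Hence the nonzero
  eigenvalues with their algebraic multiplicities are those of the matrix. The matrix is invertible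
  since \<open>\<ell> h\<^sub>N\<^sub>-\<^sub>1 > 0\<close>, and its trace is \<open>\<ell> h\<^sub>0 = 1\<close>.\<close>

abbreviation integrable01 :: "(real \<Rightarrow> 'a::{banach,second_countable_topology}) \<Rightarrow> bool" where
  "integrable01 f \<equiv> set_integrable lborel {0..1} f"

abbreviation integral01 :: "(real \<Rightarrow> 'a::{banach,second_countable_topology}) \<Rightarrow> 'a" where
  "integral01 f \<equiv> LINT t:{0..1}|lborel. f t"

lemma set_integral_split_atMost:
  fixes f :: "real \<Rightarrow> 'a::{banach,second_countable_topology}"
  assumes f: "set_integrable lborel {a..b} f" and y: "y \<in> {a..b}"
  shows "(LINT t:{a..y}|lborel. f t) + (LINT t:{y<..b}|lborel. f t) = (LINT t:{a..b}|lborel. f t)"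
proof -
  have "{a..b} = {a..y} \<union> {y<..b}" using y by auto
  moreover have "set_integrable lborel {a..y} f" "set_integrable lborel {y<..b} f"
    using y by (auto intro: set_integrable_subset[OF f])
  ultimately show ?thesis by (simp add: set_integral_Un ivl_disj_int_two(8))
qed

lemma continuous_on_set_integral_atLeastAtMost:
  fixes f :: "real \<Rightarrow> 'a::euclidean_space"
  assumes f: "set_integrable lborel {a..b} f"
  shows "continuous_on {a..b} (\<lambda>y. LINT t:{a..y}|lborel. f t)"
proof -
  have "continuous_on {a..b} (\<lambda>y. integral {a..y} f)"
    using f by (intro indefinite_integral_continuous_1 set_borel_integral_eq_integral(1))
  moreover have "(LINT t:{a..y}|lborel. f t) = integral {a..y} f" if "y \<in> {a..b}" for y
    using that by (intro set_borel_integral_eq_integral(2) set_integrable_subset[OF f]) auto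
  ultimately show ?thesis by (metis (no_types, lifting) atLeastAtMost_iff continuous_on_cong)
qed

lemma set_integral_cong_AE_on:
  fixes f g :: "real \<Rightarrow> 'a::{banach,second_countable_topology}"
  assumes f: "set_integrable lborel S f" and g: "set_integrable lborel S g"
    and A: "A \<subseteq> S" "A \<in> sets lborel"
    and ae: "AE x in lborel. x \<in> S \<longrightarrow> f x = g x"
  shows "(LINT t:A|lborel. f t) = (LINT t:A|lborel. g t)"
  unfolding set_lebesgue_integral_def
proof (rule integral_cong_AE)
  show "(\<lambda>x. indicator A x *\<^sub>R f x) \<in> borel_measurable lborel"
    using set_integrable_subset[OF f A(2,1)] unfolding set_integrable_def by auto
  show "(\<lambda>x. indicator A x *\<^sub>R g x) \<in> borel_measurable lborel"
    using set_integrable_subset[OF g A(2,1)] unfolding set_integrable_def by auto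
  show "AE x in lborel. indicator A x *\<^sub>R f x = indicator A x *\<^sub>R g x"
    using ae by eventually_elim (use A(1) in \<open>auto simp: indicator_def\<close>)
qed

lemma set_integral_sum:
  fixes f :: "'i \<Rightarrow> 'b \<Rightarrow> 'a::{banach,second_countable_topology}"
  assumes "\<And>k. k \<in> K \<Longrightarrow> set_integrable M A (f k)"
  shows "(LINT t:A|M. (\<Sum>k\<in>K. f k t)) = (\<Sum>k\<in>K. LINT t:A|M. f k t)"
  using assms unfolding set_lebesgue_integral_def set_integrable_def
  by (simp add: scaleR_sum_right integral_sum)

lemma AE_lborel_ex_in_interval:
  fixes u v :: real
  assumes ae: "AE x in lborel. P x" and uv: "u < v"
  shows "\<exists>x\<in>{u<..<v}. P x"
proof (rule ccontr)
  assume none: "\<not> (\<exists>x\<in>{u<..<v}. P x)"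
  from ae have "AE x in lborel. x \<notin> {u<..<v}" by eventually_elim (use none in auto)
  then have "emeasure lborel {u<..<v} = 0" by (subst (asm) AE_iff_measurable) auto
  then show False using uv by simp
qed

lemma set_integral_pos_interval:
  fixes g :: "real \<Rightarrow> real"
  assumes g: "set_integrable lborel {u<..<v} g" and uv: "u < v"
    and pos: "\<And>t. t \<in> {u<..<v} \<Longrightarrow> 0 < g t"
  shows "0 < (LINT t:{u<..<v}|lborel. g t)"
proof -
  have int: "integrable lborel (\<lambda>t. indicator {u<..<v} t *\<^sub>R g t)"
    using g unfolding set_integrable_def .
  have nonneg: "AE t in lborel. 0 \<le> indicator {u<..<v} t *\<^sub>R g t"
    using pos by (auto simp: indicator_def less_imp_le)
  have "\<not> (AE t in lborel. indicator {u<..<v} t *\<^sub>R g t = 0)"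
  proof
    assume "AE t in lborel. indicator {u<..<v} t *\<^sub>R g t = 0"
    then obtain t where "t \<in> {u<..<v}" "indicator {u<..<v} t *\<^sub>R g t = 0"
      using AE_lborel_ex_in_interval[OF _ uv] by blast
    then show False using pos[of t] by auto
  qed
  then have "(LINT t:{u<..<v}|lborel. g t) \<noteq> 0"
    using integral_nonneg_eq_0_iff_AE[OF int nonneg] unfolding set_lebesgue_integral_def by simp
  moreover have "0 \<le> (LINT t:{u<..<v}|lborel. g t)"
    unfolding set_lebesgue_integral_def using nonneg by (rule integral_nonneg_AE)
  ultimately show ?thesis by linarith
qed

lemma set_integral_pos_if_pos_on_interval:
  fixes g :: "real \<Rightarrow> real"
  assumes g: "set_integrable lborel A g" and nonneg: "\<And>t. t \<in> A \<Longrightarrow> 0 \<le> g t"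
    and uv: "u < v" "{u<..<v} \<subseteq> A" and pos: "\<And>t. t \<in> {u<..<v} \<Longrightarrow> 0 < g t"
  shows "0 < (LINT t:A|lborel. g t)"
proof -
  have guv: "set_integrable lborel {u<..<v} g"
    by (rule set_integrable_subset[OF g _ uv(2)]) simp
  have "0 < (LINT t:{u<..<v}|lborel. g t)" by (rule set_integral_pos_interval[OF guv uv(1) pos])
  also have "\<dots> = (LINT t:A|lborel. indicator {u<..<v} t * g t)"
    unfolding set_lebesgue_integral_def
    by (rule Bochner_Integration.integral_cong) (use uv in \<open>auto simp: indicator_def\<close>)
  also have "\<dots> \<le> (LINT t:A|lborel. g t)"
  proof (rule set_integral_mono[OF _ g])
    show "set_integrable lborel A (\<lambda>t. indicator {u<..<v} t * g t)"
      using guv unfolding set_integrable_def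
      by (rule Bochner_Integration.integrable_cong[THEN iffD1, rotated -1])
        (use uv in \<open>auto simp: indicator_def\<close>)
  qed (use nonneg in \<open>auto simp: indicator_def\<close>)
  finally show ?thesis .
qed

lemma integrable01_const: "integrable01 (\<lambda>_. c :: 'a::euclidean_space)"
  by (rule borel_integrable_atLeastAtMost') (rule continuous_on_const)

lemma integrable01_if_continuous_on: "continuous_on {0..1} f \<Longrightarrow> integrable01 (f :: real \<Rightarrow> 'a::euclidean_space)"
  by (rule borel_integrable_atLeastAtMost')

lemma L2_01_integrable01:
  assumes f: "f \<in> L2_01"
  shows "integrable01 f"
proof -
  have m: "set_borel_measurable lborel {0..1} f"
    and sq: "integrable01 (\<lambda>x. (cmod (f x))\<^sup>2)" using f unfolding L2_01_def by auto
  have "integrable01 (\<lambda>x. 1 + (cmod (f x))\<^sup>2)"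
    by (rule set_integral_add(1)[OF integrable01_const sq])
  moreover have "t \<le> 1 + t\<^sup>2" for t :: real
  proof -
    have "0 \<le> t\<^sup>2 - 2 * t + 1" using zero_le_power2[of "t - 1"] by (simp add: power2_diff)
    then show ?thesis using zero_le_power2[of t] by linarith
  qed
  ultimately show ?thesis
    by (intro set_integrable_bound[OF _ m]) auto
qed

lemma in_L2_01_if_continuous_on:
  assumes f: "continuous_on {0..1} f"
  shows "f \<in> L2_01"
proof -
  have "set_borel_measurable lborel {0..1} f"
    using integrable01_if_continuous_on[OF f]
    unfolding set_integrable_def set_borel_measurable_def by auto
  moreover have "integrable01 (\<lambda>x. (cmod (f x))\<^sup>2)"
    by (intro integrable01_if_continuous_on continuous_on_power continuous_on_norm f)
  ultimately show ?thesis unfolding L2_01_def by auto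
qed

lemma in_L2_01_if_bounded:
  assumes f: "f \<in> borel_measurable lborel" and bound: "\<And>x. cmod (f x) \<le> C"
  shows "f \<in> L2_01"
proof -
  have C: "0 \<le> C" using norm_ge_zero order_trans bound by blast
  have "set_borel_measurable lborel {0..1} f"
    using f unfolding set_borel_measurable_def by measurable
  moreover have "integrable01 (\<lambda>x. (cmod (f x))\<^sup>2)"
  proof (rule set_integrable_bound[OF integrable01_const[of "C\<^sup>2"]])
    show "set_borel_measurable lborel {0..1} (\<lambda>x. (cmod (f x))\<^sup>2)"
      using f unfolding set_borel_measurable_def by measurable
    show "AE x in lborel. x \<in> {0..1} \<longrightarrow> norm ((cmod (f x))\<^sup>2) \<le> norm (C\<^sup>2)"
      using bound C by (auto intro!: power_mono)
  qed
  ultimately show ?thesis unfolding L2_01_def by auto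
qed

definition lin_indep_vecs :: "nat \<Rightarrow> 'a::field vec list \<Rightarrow> bool" where
  "lin_indep_vecs n vs \<longleftrightarrow> (\<forall>c. (\<forall>j<n. (\<Sum>i<length vs. c i * vs!i $ j) = 0) \<longrightarrow> (\<forall>i<length vs. c i = 0))"

lemma sum_set_nth:
  assumes "distinct vs"
  shows "(\<Sum>x\<in>set vs. g x) = (\<Sum>i<length vs. g (vs!i))"
proof -
  have "set vs = (!) vs ` {..<length vs}" by (auto simp: in_set_conv_nth)
  moreover have "inj_on ((!) vs) {..<length vs}" using assms by (simp add: inj_on_nth)
  ultimately show ?thesis by (simp add: sum.reindex)
qed

lemma lin_indep_vecs_distinct:
  assumes li: "lin_indep_vecs n vs"
  shows "distinct vs"
proof (rule ccontr)
  assume "\<not> distinct vs"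
  then obtain i j where ij: "i < length vs" "j < length vs" "i \<noteq> j" "vs!i = vs!j"
    by (auto simp: distinct_conv_nth)
  define c where "c = (\<lambda>k. if k = i then (1::'a) else if k = j then -1 else 0)"
  have "\<forall>l<n. (\<Sum>k<length vs. c k * vs!k $ l) = 0"
  proof (intro allI impI)
    fix l assume l: "l < n"
    have "(\<Sum>k<length vs. c k * vs!k $ l) = (\<Sum>k<length vs. (if k = i then vs!k $ l else 0) + (if k = j then - (vs!k $ l) else 0))"
      by (rule sum.cong) (use ij in \<open>auto simp: c_def\<close>)
    also have "\<dots> = vs!i $ l - vs!j $ l" using ij by (simp add: sum.distrib)
    also have "\<dots> = 0" using ij by simp
    finally show "(\<Sum>k<length vs. c k * vs!k $ l) = 0" .
  qed
  then have "c i = 0" using li ij unfolding lin_indep_vecs_def by blast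
  then show False by (simp add: c_def)
qed

lemma lin_indep_vecs_le_kernel_dim:
  assumes A: "A \<in> carrier_mat n n" and ker: "set vs \<subseteq> mat_kernel A" and li: "lin_indep_vecs n vs"
  shows "length vs \<le> kernel_dim A"
proof -
  interpret K: kernel n n A by (unfold_locales, rule A)
  have dist: "distinct vs" by (rule lin_indep_vecs_distinct[OF li])
  obtain B where B: "finite B" "K.basis B" using kernel_basis_exists[OF A] by blast
  have bb: "K.gen_set B" "B \<subseteq> mat_kernel A" using B(2) unfolding K.Ker.basis_def by simp_all
  have fd: "K.Ker.fin_dim" unfolding K.Ker.fin_dim_def
    by (rule exI[of _ B]) (use B(1) bb in simp)
  have indpt: "\<not> K.lin_dep (set vs)"
  proof
    assume "K.lin_dep (set vs)"
    then obtain S a v where S: "finite S" "S \<subseteq> set vs" "K.lincomb a S = 0\<^sub>v n" "v \<in> S" "a v \<noteq> 0"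
      unfolding K.Ker.lin_dep_def by auto
    define a' where "a' = (\<lambda>x. if x \<in> S then a x else 0)"
    have Sk: "S \<subseteq> mat_kernel A" using S(2) ker by auto
    have "\<forall>j<n. (\<Sum>i<length vs. a' (vs!i) * vs!i $ j) = 0"
    proof (intro allI impI)
      fix j assume j: "j < n"
      have "(\<Sum>i<length vs. a' (vs!i) * vs!i $ j) = (\<Sum>x\<in>set vs. a' x * x $ j)"
        by (rule sum_set_nth[OF dist, symmetric])
      also have "\<dots> = (\<Sum>x\<in>S. a x * x $ j)"
        by (rule sum.mono_neutral_cong_right) (use S in \<open>auto simp: a'_def\<close>)
      also have "\<dots> = K.lincomb a S $ j" by (rule K.lincomb_index[OF j Sk, symmetric])
      also have "\<dots> = 0" using S j by simp
      finally show "(\<Sum>i<length vs. a' (vs!i) * vs!i $ j) = 0" .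
    qed
    then have "\<forall>i<length vs. a' (vs!i) = 0" using li unfolding lin_indep_vecs_def
      by (intro allI impI) (erule allE[of _ "\<lambda>i. a' (vs!i)"], blast)
    moreover obtain i where "i < length vs" "vs!i = v" using S(2,4) by (metis in_set_conv_nth subsetD)
    ultimately have "a' v = 0" by blast
    then show False using S by (simp add: a'_def)
  qed
  have "card (set vs) \<le> K.dim"
    by (rule K.Ker.li_le_dim(2)[OF fd]) (use ker indpt in auto)
  then show ?thesis using distinct_card[OF dist] by simp
qed

lemma kernel_dim_lin_indep_vecs:
  assumes A: "A \<in> carrier_mat n n"
  shows "\<exists>vs. set vs \<subseteq> mat_kernel A \<and> lin_indep_vecs n vs \<and> length vs = kernel_dim A"
proof -
  interpret K: kernel n n A by (unfold_locales, rule A)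
  obtain B where B: "finite B" "K.basis B" using kernel_basis_exists[OF A] by blast
  have dimB: "K.dim = card B" by (rule K.Ker.dim_basis[OF B])
  obtain vs where vs: "set vs = B" "distinct vs" using finite_distinct_list[OF B(1)] by blast
  have Bk: "B \<subseteq> mat_kernel A" and indpt: "\<not> K.lin_dep B" using B(2) unfolding K.Ker.basis_def by auto
  have li: "lin_indep_vecs n vs" unfolding lin_indep_vecs_def
  proof (intro allI impI)
    fix c i assume c: "\<forall>j<n. (\<Sum>i<length vs. c i * vs!i $ j) = 0" and i: "i < length vs"
    define a where "a = (\<lambda>v. c (inv_into {..<length vs} ((!) vs) v))"
    have inj: "inj_on ((!) vs) {..<length vs}" using vs(2) by (simp add: inj_on_nth)
    have anth: "a (vs!k) = c k" if "k < length vs" for k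
      unfolding a_def using inv_into_f_f[OF inj] that by simp
    have lc0: "K.lincomb a B = \<zero>\<^bsub>K.VK\<^esub>"
    proof -
      have "K.lincomb a B \<in> mat_kernel A"
        by (rule K.Ker.lincomb_closed) (use Bk in auto)
      then have carr: "K.lincomb a B \<in> carrier_vec n" using mat_kernel_carrier[OF A] by auto
      show ?thesis
      proof (simp, rule eq_vecI)
        show "dim_vec (K.lincomb a B) = dim_vec (0\<^sub>v n)" using carr by simp
        fix j assume "j < dim_vec (0\<^sub>v n :: 'a vec)"
        then have j: "j < n" by simp
        have "K.lincomb a B $ j = (\<Sum>x\<in>set vs. a x * x $ j)" using K.lincomb_index[OF j Bk] vs(1) by simp
        also have "\<dots> = (\<Sum>k<length vs. a (vs!k) * vs!k $ j)" by (rule sum_set_nth[OF vs(2)])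
        also have "\<dots> = (\<Sum>k<length vs. c k * vs!k $ j)" by (rule sum.cong) (auto simp: anth)
        also have "\<dots> = 0" using c j by simp
        finally show "K.lincomb a B $ j = 0\<^sub>v n $ j" using j by simp
      qed
    qed
    have "a (vs!i) = 0"
    proof (rule ccontr)
      assume "a (vs!i) \<noteq> 0"
      then have "K.lin_dep B" unfolding K.Ker.lin_dep_def
        using lc0 B(1) vs(1) i by (intro exI[of _ B] exI[of _ a] exI[of _ "vs!i"]) auto
      then show False using indpt by simp
    qed
    then show "c i = 0" using anth[OF i] by simp
  qed
  show ?thesis using li vs Bk dimB distinct_card[OF vs(2)] by (intro exI[of _ vs]) auto
qed

lemma kernel_dim_pos_iff:
  assumes A: "A \<in> carrier_mat n n"
  shows "1 \<le> kernel_dim A \<longleftrightarrow> (\<exists>v\<in>carrier_vec n. v \<noteq> 0\<^sub>v n \<and> A *\<^sub>v v = 0\<^sub>v n)"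
proof
  assume "\<exists>v\<in>carrier_vec n. v \<noteq> 0\<^sub>v n \<and> A *\<^sub>v v = 0\<^sub>v n"
  then obtain v where v: "v \<in> carrier_vec n" "v \<noteq> 0\<^sub>v n" "A *\<^sub>v v = 0\<^sub>v n" by blast
  have "length [v] \<le> kernel_dim A"
  proof (rule lin_indep_vecs_le_kernel_dim[OF A])
    show "set [v] \<subseteq> mat_kernel A" using v A by (auto intro: mat_kernelI)
    obtain j where "j < n" "v $ j \<noteq> 0" using v by (metis carrier_vecD eq_vecI index_zero_vec(1,2))
    then show "lin_indep_vecs n [v]" unfolding lin_indep_vecs_def by auto
  qed
  then show "1 \<le> kernel_dim A" by simp
next
  assume d: "1 \<le> kernel_dim A"
  obtain vs where vs: "set vs \<subseteq> mat_kernel A" "lin_indep_vecs n vs" "length vs = kernel_dim A"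
    using kernel_dim_lin_indep_vecs[OF A] by blast
  then have l: "0 < length vs" using d by simp
  have v: "vs ! 0 \<in> mat_kernel A" using vs(1) l by auto
  have "vs ! 0 \<noteq> 0\<^sub>v n"
  proof
    assume z: "vs ! 0 = 0\<^sub>v n"
    define c where "c = (\<lambda>i::nat. if i = 0 then (1::'a) else 0)"
    have "(\<Sum>i<length vs. c i * vs ! i $ j) = 0" if j: "j < n" for j
    proof -
      have "(\<Sum>i<length vs. c i * vs ! i $ j) = (\<Sum>i<length vs. if i = 0 then vs ! 0 $ j else 0)"
        by (rule sum.cong) (auto simp: c_def)
      also have "\<dots> = 0" using l z j by simp
      finally show ?thesis .
    qed
    then have "c 0 = 0" using vs(2) l unfolding lin_indep_vecs_def by blast
    then show False by (simp add: c_def)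
  qed
  then show "\<exists>v\<in>carrier_vec n. v \<noteq> 0\<^sub>v n \<and> A *\<^sub>v v = 0\<^sub>v n" using mat_kernelD[OF A v] by blast
qed

definition mat_trace :: "'a::comm_ring_1 mat \<Rightarrow> 'a" where
  "mat_trace A = (\<Sum>i<dim_row A. A $$ (i,i))"

lemma mat_trace_mult_comm:
  assumes A: "A \<in> carrier_mat n m" and B: "B \<in> carrier_mat m n"
  shows "mat_trace (A * B) = mat_trace (B * A)"
proof -
  have "mat_trace (A * B) = (\<Sum>i<n. \<Sum>k<m. A $$ (i,k) * B $$ (k,i))"
    unfolding mat_trace_def using A B
    by (auto simp: scalar_prod_def atLeast0LessThan intro!: sum.cong)
  also have "\<dots> = (\<Sum>k<m. \<Sum>i<n. B $$ (k,i) * A $$ (i,k))"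
    by (subst sum.swap) (simp add: mult.commute)
  also have "\<dots> = mat_trace (B * A)"
    unfolding mat_trace_def using A B
    by (auto simp: scalar_prod_def atLeast0LessThan intro!: sum.cong)
  finally show ?thesis .
qed

lemma mat_trace_similar:
  assumes "similar_mat A B"
  shows "mat_trace A = mat_trace B"
proof -
  obtain n P Q where s: "{A,B,P,Q} \<subseteq> carrier_mat n n" "P * Q = 1\<^sub>m n" "Q * P = 1\<^sub>m n" "A = P * B * Q"
    using similar_matD[OF assms] by blast
  have A: "A \<in> carrier_mat n n" and B: "B \<in> carrier_mat n n" and P: "P \<in> carrier_mat n n"
    and Q: "Q \<in> carrier_mat n n" using s(1) by auto
  have "mat_trace A = mat_trace ((P * B) * Q)" using s by simp
  also have "\<dots> = mat_trace (Q * (P * B))" by (rule mat_trace_mult_comm[of _ n n]) (use P B Q in auto)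
  also have "Q * (P * B) = (Q * P) * B" using P B Q by (simp add: assoc_mult_mat)
  also have "\<dots> = B" using s(3) B by simp
  finally show ?thesis .
qed

lemma coeff_prod_linear_factors:
  fixes L :: "'a::comm_ring_1 list"
  shows "coeff (\<Prod>a\<leftarrow>L. [:-a, 1:]) (length L) = 1 \<and> (\<forall>k>length L. coeff (\<Prod>a\<leftarrow>L. [:-a, 1:]) k = 0)
    \<and> (L \<noteq> [] \<longrightarrow> coeff (\<Prod>a\<leftarrow>L. [:-a, 1:]) (length L - 1) = - sum_list L)"
proof (induction L)
  case Nil then show ?case by auto
next
  case (Cons a L)
  define p where "p = (\<Prod>a\<leftarrow>L. [:-a, 1:])"
  have eq: "(\<Prod>a\<leftarrow>a#L. [:-a, 1:]) = Polynomial.smult (-a) p + pCons 0 p" by (simp add: p_def mult_pCons_left)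
  have c: "coeff (\<Prod>a\<leftarrow>a#L. [:-a, 1:]) k = -a * coeff p k + (if k = 0 then 0 else coeff p (k - 1))" for k
    unfolding eq by (cases k) auto
  have IH1: "coeff p (length L) = 1" and IH2: "\<And>k. k > length L \<Longrightarrow> coeff p k = 0"
    and IH3: "L \<noteq> [] \<Longrightarrow> coeff p (length L - 1) = - sum_list L" using Cons.IH unfolding p_def by auto
  show ?case
  proof (intro conjI allI impI)
    show "coeff (\<Prod>a\<leftarrow>a#L. [:-a, 1:]) (length (a#L)) = 1" unfolding c using IH1 IH2 by simp
    fix k assume "k > length (a#L)"
    then show "coeff (\<Prod>a\<leftarrow>a#L. [:-a, 1:]) k = 0" unfolding c using IH2 by simp
  next
    show "coeff (\<Prod>a\<leftarrow>a#L. [:-a, 1:]) (length (a#L) - 1) = - sum_list (a#L)"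
    proof (cases L)
      case Nil then show ?thesis unfolding c p_def by simp
    next
      case (Cons b L')
      then show ?thesis unfolding c using IH1 IH3 by simp
    qed
  qed
qed

lemma sum_list_eq_if_prod_linear_factors_eq:
  fixes L M :: "'a::comm_ring_1 list"
  assumes eq: "(\<Prod>a\<leftarrow>L. [:-a, 1:]) = (\<Prod>a\<leftarrow>M. [:-a, 1:])" and len: "length L = length M"
  shows "sum_list L = sum_list M"
proof (cases "L = []")
  case True then show ?thesis using len by simp
next
  case False
  then have "M \<noteq> []" using len by auto
  then show ?thesis using coeff_prod_linear_factors[of L] coeff_prod_linear_factors[of M] eq len False by simp
qed

lemma expand_powers_length: "length (expand_powers n_as) = sum_list (map fst n_as)"
  by (induction n_as rule: expand_powers.induct) auto

lemma expand_powers_count: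
  "length (filter ((=) \<mu>) (expand_powers n_as)) = sum_list (map fst [(n, e)\<leftarrow>n_as . e = \<mu>])"
  by (induction n_as rule: expand_powers.induct) auto

lemma expand_powers_set: "a \<in> set (expand_powers n_as) \<longleftrightarrow> (\<exists>n. (n, a) \<in> set n_as \<and> 0 < n)"
  by (induction n_as rule: expand_powers.induct) auto

lemma sum_min_le: "sum_list (map (min k) xs) \<le> sum_list (xs::nat list)"
  by (induction xs) auto

lemma sum_min_big: "(\<forall>n\<in>set xs. n \<le> k) \<Longrightarrow> sum_list (map (min k) xs) = sum_list (xs::nat list)"
  by (induction xs) auto

lemma sum_min1_pos: "1 \<le> sum_list (map (min 1) xs) \<longleftrightarrow> (\<exists>n\<in>set xs. 0 < (n::nat))"
  by (induction xs) auto

lemma jordan_nf_size: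
  assumes A: "A \<in> carrier_mat n n" and jnf: "jordan_nf A n_as"
  shows "sum_list (map fst n_as) = n"
proof -
  obtain m P Q where "{A, jordan_matrix n_as, P, Q} \<subseteq> carrier_mat m m"
    using jnf similar_matD unfolding jordan_nf_def by blast
  moreover have "dim_row (jordan_matrix n_as) = sum_list (map fst n_as)" by simp
  ultimately show ?thesis using A by (metis carrier_matD(1) insert_subset)
qed

lemma sum_list_expand_powers_jordan_nf:
  fixes A :: "'a::field mat"
  assumes A: "A \<in> carrier_mat n n" and jnf: "jordan_nf A n_as"
  shows "sum_list (expand_powers n_as) = mat_trace A"
proof -
  define J where "J = jordan_matrix n_as"
  have J: "J \<in> carrier_mat n n" unfolding J_def carrier_mat_def using jordan_nf_size[OF A jnf] by simp
  have "upper_triangular J" unfolding upper_triangular_def J_def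
    using jordan_matrix_upper_triangular by auto
  then have "char_poly J = (\<Prod>a\<leftarrow>diag_mat J. [:- a, 1:])"
    by (rule char_poly_upper_triangular[OF J])
  moreover have "char_poly J = (\<Prod>a\<leftarrow>expand_powers n_as. [:- a, 1:])"
    unfolding J_def jordan_matrix_char_poly expand_powers by (simp add: o_def)
  ultimately have "(\<Prod>a\<leftarrow>diag_mat J. [:- a, 1:]) = (\<Prod>a\<leftarrow>expand_powers n_as. [:- a, 1:])"
    by simp
  then have "sum_list (diag_mat J) = sum_list (expand_powers n_as)"
    by (rule sum_list_eq_if_prod_linear_factors_eq)
      (use J jordan_nf_size[OF A jnf] in \<open>simp add: diag_mat_def expand_powers_length\<close>)
  moreover have "sum_list (diag_mat J) = mat_trace J"
    unfolding diag_mat_def mat_trace_def by (simp add: sum_list_sum_nth atLeast0LessThan)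
  moreover have "mat_trace A = mat_trace J"
    using jnf unfolding jordan_nf_def J_def by (intro mat_trace_similar) auto
  ultimately show ?thesis by simp
qed

lemma jordan_eigenvalue_list:
  fixes A :: "complex mat"
  assumes A: "A \<in> carrier_mat n n"
  obtains as where "length as = n" "sum_list as = mat_trace A"
    "\<And>\<mu> k. kernel_dim (char_matrix A \<mu> ^\<^sub>m k) \<le> length (filter ((=) \<mu>) as)"
    "\<And>\<mu>. kernel_dim (char_matrix A \<mu> ^\<^sub>m n) = length (filter ((=) \<mu>) as)"
    "\<And>\<mu>. \<mu> \<in> set as \<longleftrightarrow> 1 \<le> kernel_dim (char_matrix A \<mu> ^\<^sub>m 1)"
proof -
  obtain cs where cs: "char_poly A = (\<Prod>a\<leftarrow>cs. [:- a, 1:])" using char_poly_factorized[OF A] by blast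
  obtain n_as where jnf: "jordan_nf A n_as" using jordan_nf_exists[OF A cs] by blast
  define as where "as = expand_powers n_as"
  define blocks where "blocks \<mu> = map fst [(n, e)\<leftarrow>n_as . e = \<mu>]" for \<mu>
  have dims: "kernel_dim (char_matrix A \<mu> ^\<^sub>m k) = sum_list (map (min k) (blocks \<mu>))" for \<mu> k
    using dim_gen_eigenspace[OF jnf, of \<mu> k] unfolding dim_gen_eigenspace_def blocks_def
    by (simp add: o_def)
  have count: "length (filter ((=) \<mu>) as) = sum_list (blocks \<mu>)" for \<mu>
    unfolding as_def blocks_def by (rule expand_powers_count)
  have blocks_le: "b \<le> n" if "b \<in> set (blocks \<mu>)" for b \<mu>
  proof -
    have "b \<in> set (map fst n_as)" using that unfolding blocks_def by auto
    then have "b \<le> sum_list (map fst n_as)" by (rule member_le_sum_list) simp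
    then show ?thesis using jordan_nf_size[OF A jnf] by simp
  qed
  show ?thesis
  proof (rule that)
    show "length as = n"
      unfolding as_def expand_powers_length using jordan_nf_size[OF A jnf] .
    show "sum_list as = mat_trace A"
      unfolding as_def by (rule sum_list_expand_powers_jordan_nf[OF A jnf])
    show "kernel_dim (char_matrix A \<mu> ^\<^sub>m k) \<le> length (filter ((=) \<mu>) as)" for \<mu> k
      unfolding dims count by (rule sum_min_le)
    show "kernel_dim (char_matrix A \<mu> ^\<^sub>m n) = length (filter ((=) \<mu>) as)" for \<mu>
      unfolding dims count using blocks_le by (intro sum_min_big) auto
    show "\<mu> \<in> set as \<longleftrightarrow> 1 \<le> kernel_dim (char_matrix A \<mu> ^\<^sub>m 1)" for \<mu>
      unfolding dims sum_min1_pos as_def expand_powers_set blocks_def by force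
  qed
qed

lemma image_nth_pred:
  assumes "length xs = n"
  shows "(\<lambda>i. xs ! (i - 1)) ` {1..n} = set xs"
proof (intro equalityI subsetI)
  fix x assume "x \<in> (\<lambda>i. xs ! (i - 1)) ` {1..n}"
  then obtain i where "i \<in> {1..n}" "x = xs ! (i - 1)" by blast
  then show "x \<in> set xs" using assms by auto
next
  fix x assume "x \<in> set xs"
  then obtain i where "i < length xs" "x = xs ! i" by (auto simp: in_set_conv_nth)
  then have "Suc i \<in> {1..n}" "x = xs ! (Suc i - 1)" using assms by auto
  then show "x \<in> (\<lambda>i. xs ! (i - 1)) ` {1..n}" by blast
qed

lemma sum_nth_pred:
  assumes "length xs = n"
  shows "(\<Sum>i=1..n. xs ! (i - 1)) = sum_list xs"
  using assms by (simp add: sum.atLeast1_atMost_eq sum_list_sum_nth atLeast0LessThan)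

lemma card_nth_pred_eq:
  assumes "length xs = n"
  shows "card {i\<in>{1..n}. xs ! (i - 1) = a} = length (filter ((=) a) xs)"
proof -
  have "{i\<in>{1..n}. xs ! (i - 1) = a} = Suc ` {i. i < length xs \<and> a = xs ! i}"
  proof (intro equalityI subsetI)
    fix i assume "i \<in> {i\<in>{1..n}. xs ! (i - 1) = a}"
    then have "i = Suc (i - 1)" "i - 1 < length xs" "a = xs ! (i - 1)" using assms by auto
    then show "i \<in> Suc ` {i. i < length xs \<and> a = xs ! i}" by blast
  qed (use assms in auto)
  then show ?thesis by (simp add: card_image length_filter_conv_card)
qed

locale volterra_setting =
  fixes \<phi> :: "real \<Rightarrow> real" and \<epsilon> :: real and N :: nat
  assumes mono: "mono_on {0..1} \<phi>"
    and cont: "continuous_on {0..1} \<phi>"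
    and range: "\<phi> ` {0..1} \<subseteq> {0..1}"
    and above: "\<forall>x\<in>{0<..<1}. \<phi> x > x"
    and pos0: "\<phi> 0 > 0"
    and eps: "0 < \<epsilon>" "\<epsilon> < 1" "\<phi> (1 - \<epsilon>) = 1"
    and N1: "\<forall>x\<in>{0..1}. (\<phi> ^^ N) x = 1"
    and N2: "\<exists>x0\<in>{0..<1}. (\<phi> ^^ (N - 1)) x0 \<noteq> 1"
begin

lemma phi_in_01: "x \<in> {0..1} \<Longrightarrow> \<phi> x \<in> {0..1}"
  using range by blast

lemma phi_mono: "x \<in> {0..1} \<Longrightarrow> y \<in> {0..1} \<Longrightarrow> x \<le> y \<Longrightarrow> \<phi> x \<le> \<phi> y"
  using mono unfolding mono_on_def by auto

lemma phi_1: "\<phi> 1 = 1"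
proof -
  have "\<phi> (1 - \<epsilon>) \<le> \<phi> 1" using eps by (intro phi_mono) auto
  then show ?thesis using eps(3) phi_in_01[of 1] by auto
qed

lemma le_phi: "x \<in> {0..1} \<Longrightarrow> x \<le> \<phi> x"
  using above pos0 phi_1 by (cases "x = 0 \<or> x = 1") (auto simp: less_imp_le)

lemma funpow_phi_in_01: "x \<in> {0..1} \<Longrightarrow> (\<phi> ^^ k) x \<in> {0..1}"
  by (induction k) (use phi_in_01 in auto)

lemma funpow_phi_mono:
  "x \<in> {0..1} \<Longrightarrow> y \<in> {0..1} \<Longrightarrow> x \<le> y \<Longrightarrow> (\<phi> ^^ k) x \<le> (\<phi> ^^ k) y"
proof (induction k)
  case (Suc k)
  have "\<phi> ((\<phi> ^^ k) x) \<le> \<phi> ((\<phi> ^^ k) y)"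
    by (rule phi_mono[OF funpow_phi_in_01 funpow_phi_in_01 Suc.IH]) (use Suc.prems in auto)
  then show ?case by simp
qed simp

lemma continuous_on_funpow_phi: "continuous_on {0..1} (\<phi> ^^ k)"
proof (induction k)
  case (Suc k)
  have "continuous_on {0..1} (\<phi> \<circ> (\<phi> ^^ k))"
    using funpow_phi_in_01
    by (intro continuous_on_compose[OF Suc] continuous_on_subset[OF cont]) blast
  then show ?case by simp
qed (simp add: continuous_on_id)

lemma funpow_phi_1: "(\<phi> ^^ k) 1 = 1"
  by (induction k) (auto simp: phi_1)

lemma le_funpow_phi: "x \<in> {0..1} \<Longrightarrow> x \<le> (\<phi> ^^ k) x"
  by (induction k) (auto intro: order_trans[OF _ le_phi[OF funpow_phi_in_01]])

lemma funpow_phi_ge_1_mono: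
  assumes x: "x \<in> {0..1}" and k: "(\<phi> ^^ k) x \<ge> 1" and kj: "k \<le> j"
  shows "(\<phi> ^^ j) x \<ge> 1"
proof -
  have "(\<phi> ^^ k) x = 1" using k funpow_phi_in_01[OF x, of k] by auto
  then have "(\<phi> ^^ (j - k + k)) x = 1" by (simp add: funpow_add funpow_phi_1)
  then show ?thesis using kj by simp
qed

lemma N_pos: "N \<ge> 1"
  using N1[rule_format, of 0] by (cases N) auto

lemma funpow_phi_0_lt_1:
  assumes j: "j \<le> N - 1"
  shows "(\<phi> ^^ j) 0 < 1"
proof -
  obtain x0 where x0: "x0 \<in> {0..<1}" "(\<phi> ^^ (N - 1)) x0 \<noteq> 1" using N2 by auto
  have "(\<phi> ^^ j) 0 \<le> (\<phi> ^^ j) ((\<phi> ^^ (N - 1 - j)) 0)"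
    using funpow_phi_in_01[of 0] le_funpow_phi[of 0] by (intro funpow_phi_mono) auto
  also have "\<dots> = (\<phi> ^^ (N - 1)) 0"
    using j funpow_add[of j "N - 1 - j" \<phi>] by (metis comp_apply le_add_diff_inverse)
  also have "\<dots> \<le> (\<phi> ^^ (N - 1)) x0" using x0 by (intro funpow_phi_mono) auto
  finally show ?thesis using x0 funpow_phi_in_01[of x0 "N - 1"] by auto
qed

lemma funpow_phi_N: "x \<in> {0..1} \<Longrightarrow> (\<phi> ^^ N) x = 1"
  using N1 by auto

end

definition tail_op :: "(real \<Rightarrow> real) \<Rightarrow> (real \<Rightarrow> 'a::{banach,second_countable_topology}) \<Rightarrow> real \<Rightarrow> 'a" where
  "tail_op \<phi> f x = (LINT t:{\<phi> x<..1}|lborel. f t)"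

lemma tail_op_of_real:
  "tail_op \<phi> (\<lambda>t. complex_of_real (f t)) x = complex_of_real (tail_op \<phi> f x)"
  unfolding tail_op_def by (rule set_integral_complex_of_real)

context volterra_setting
begin

lemma tail_op_eq_integral01_minus:
  fixes f :: "real \<Rightarrow> 'a::{banach,second_countable_topology}"
  assumes f: "integrable01 f" and x: "x \<in> {0..1}"
  shows "tail_op \<phi> f x = integral01 f - (LINT t:{0..\<phi> x}|lborel. f t)"
  using set_integral_split_atMost[OF f phi_in_01[OF x]] unfolding tail_op_def
  by (simp add: algebra_simps)

lemma Vop_eq_integral01_minus_tail_op:
  assumes f: "integrable01 f" and x: "x \<in> {0..1}"
  shows "Vop \<phi> f x = integral01 f - tail_op \<phi> f x"
  using tail_op_eq_integral01_minus[OF f x] unfolding Vop_def by simp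

lemma continuous_on_tail_op:
  fixes f :: "real \<Rightarrow> 'a::euclidean_space"
  assumes f: "integrable01 f"
  shows "continuous_on {0..1} (tail_op \<phi> f)"
proof -
  have "continuous_on {0..1} ((\<lambda>y. LINT t:{0..y}|lborel. f t) \<circ> \<phi>)"
    using phi_in_01
    by (intro continuous_on_compose[OF cont]
        continuous_on_subset[OF continuous_on_set_integral_atLeastAtMost[OF f]]) blast
  then have "continuous_on {0..1} (\<lambda>x. integral01 f - (LINT t:{0..\<phi> x}|lborel. f t))"
    by (intro continuous_on_diff continuous_on_const) (simp add: o_def)
  then show ?thesis using tail_op_eq_integral01_minus[OF f] by (metis (no_types, lifting) continuous_on_cong)
qed

lemma integrable01_tail_op:
  fixes f :: "real \<Rightarrow> 'a::euclidean_space"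
  shows "integrable01 f \<Longrightarrow> integrable01 (tail_op \<phi> f)"
  by (rule integrable01_if_continuous_on[OF continuous_on_tail_op])

lemma continuous_on_Vop:
  assumes f: "integrable01 f"
  shows "continuous_on {0..1} (Vop \<phi> f)"
proof -
  have "continuous_on {0..1} (\<lambda>x. integral01 f - tail_op \<phi> f x)"
    by (intro continuous_on_diff continuous_on_const continuous_on_tail_op f)
  then show ?thesis using Vop_eq_integral01_minus_tail_op[OF f] by (metis (no_types, lifting) continuous_on_cong)
qed

lemma integrable01_Vop: "integrable01 f \<Longrightarrow> integrable01 (Vop \<phi> f)"
  by (rule integrable01_if_continuous_on[OF continuous_on_Vop])

lemma tail_op_linear:
  fixes f g :: "real \<Rightarrow> complex"
  assumes f: "integrable01 f" and g: "integrable01 g" and x: "x \<in> {0..1}"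
  shows "tail_op \<phi> (\<lambda>t. a * f t + b * g t) x = a * tail_op \<phi> f x + b * tail_op \<phi> g x"
proof -
  have sub: "{\<phi> x<..1} \<subseteq> {0..1}" using phi_in_01[OF x] by auto
  have fi: "set_integrable lborel {\<phi> x<..1} f" by (rule set_integrable_subset[OF f _ sub]) simp
  have gi: "set_integrable lborel {\<phi> x<..1} g" by (rule set_integrable_subset[OF g _ sub]) simp
  show ?thesis unfolding tail_op_def
    by (subst set_integral_add(2))
      (auto intro!: set_integrable_mult_right fi gi simp: set_integral_mult_right)
qed

lemma tail_op_cong_ae01:
  fixes f g :: "real \<Rightarrow> 'a::{banach,second_countable_topology}"
  assumes "integrable01 f" "integrable01 g" "x \<in> {0..1}"
    and "AE x in lborel. x \<in> {0..1} \<longrightarrow> f x = g x"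
  shows "tail_op \<phi> f x = tail_op \<phi> g x"
  unfolding tail_op_def
  by (rule set_integral_cong_AE_on[OF assms(1,2) _ _ assms(4)]) (use phi_in_01[OF assms(3)] in auto)

lemma Vop_cong_ae01:
  assumes "integrable01 f" "integrable01 g" "x \<in> {0..1}"
    and "AE x in lborel. x \<in> {0..1} \<longrightarrow> f x = g x"
  shows "Vop \<phi> f x = Vop \<phi> g x"
  unfolding Vop_def
  by (rule set_integral_cong_AE_on[OF assms(1,2) _ _ assms(4)]) (use phi_in_01[OF assms(3)] in auto)

lemma integrable01_tail_op_funpow:
  fixes f :: "real \<Rightarrow> 'a::euclidean_space"
  shows "integrable01 f \<Longrightarrow> integrable01 ((tail_op \<phi> ^^ k) f)"
  by (induction k) (auto intro: integrable01_tail_op)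

text \<open>\<open>(T\<^sup>k f)(x)\<close> only depends on \<open>f\<close> on \<open>(\<phi>\<^sup>k(x), 1]\<close>, which is empty once \<open>\<phi>\<^sup>k(x) = 1\<close>.\<close>

lemma tail_op_funpow_eq_0:
  assumes "1 \<le> k" "x \<in> {0..1}" "(\<phi> ^^ k) x \<ge> 1"
  shows "(tail_op \<phi> ^^ k) f x = 0"
  using assms
proof (induction k arbitrary: x rule: nat_induct_at_least)
  case base
  then have "{\<phi> x<..1} = {}" by auto
  then show ?case by (simp add: tail_op_def set_lebesgue_integral_def)
next
  case (Suc k)
  have px: "\<phi> x \<in> {0..1}" using phi_in_01 Suc.prems by auto
  have "(tail_op \<phi> ^^ k) f t = 0" if t: "t \<in> {\<phi> x<..1}" for t
  proof (rule Suc.IH)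
    show t01: "t \<in> {0..1}" using t px by auto
    have "(\<phi> ^^ k) (\<phi> x) \<le> (\<phi> ^^ k) t" using t px t01 by (intro funpow_phi_mono) auto
    then show "(\<phi> ^^ k) t \<ge> 1" using Suc.prems by (simp add: funpow_Suc_right del: funpow.simps)
  qed
  then have "(LINT t:{\<phi> x<..1}|lborel. (tail_op \<phi> ^^ k) f t) = (LINT t:{\<phi> x<..1}|lborel. 0)"
    by (intro set_lebesgue_integral_cong) auto
  moreover have "(tail_op \<phi> ^^ Suc k) f x = (LINT t:{\<phi> x<..1}|lborel. (tail_op \<phi> ^^ k) f t)"
    by (simp add: tail_op_def)
  ultimately show ?case by (simp add: set_lebesgue_integral_def)
qed

lemma tail_op_nilpotent:
  assumes "x \<in> {0..1}"
  shows "(tail_op \<phi> ^^ N) f x = 0"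
  using tail_op_funpow_eq_0[OF N_pos assms] funpow_phi_N[OF assms] by simp

end

lemma continuous_on_pos_near:
  fixes g :: "real \<Rightarrow> real"
  assumes "continuous_on S g" "y \<in> S" "0 < g y"
  shows "\<exists>d>0. \<forall>t\<in>S. dist t y < d \<longrightarrow> 0 < g t"
proof -
  obtain d where "d > 0" "\<forall>t\<in>S. dist t y < d \<longrightarrow> dist (g t) (g y) < g y"
    using assms unfolding continuous_on_iff by blast
  then show ?thesis by (intro exI[of _ d]) (auto simp: dist_real_def)
qed

definition tail_fun :: "(real \<Rightarrow> real) \<Rightarrow> nat \<Rightarrow> real \<Rightarrow> real" where
  "tail_fun \<phi> k = (tail_op \<phi> ^^ k) (\<lambda>_. 1)"

lemma tail_fun_0 [simp]: "tail_fun \<phi> 0 = (\<lambda>_. 1)"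
  by (simp add: tail_fun_def)

lemma tail_fun_Suc: "tail_fun \<phi> (Suc k) = tail_op \<phi> (tail_fun \<phi> k)"
  by (simp add: tail_fun_def)

context volterra_setting
begin

lemma integrable01_tail_fun: "integrable01 (tail_fun \<phi> k)"
  unfolding tail_fun_def by (rule integrable01_tail_op_funpow[OF integrable01_const])

lemma continuous_on_tail_fun: "continuous_on {0..1} (tail_fun \<phi> k)"
  by (cases k) (simp_all add: continuous_on_const tail_fun_Suc continuous_on_tail_op integrable01_tail_fun)

lemma tail_fun_nonneg: "x \<in> {0..1} \<Longrightarrow> 0 \<le> tail_fun \<phi> k x"
proof (induction k arbitrary: x)
  case (Suc k)
  have sub: "{\<phi> x<..1} \<subseteq> {0..1}" using phi_in_01[OF Suc.prems] by auto
  have "(LINT t:{\<phi> x<..1}|lborel. (0::real)) \<le> (LINT t:{\<phi> x<..1}|lborel. tail_fun \<phi> k t)"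
    using Suc.IH sub
    by (intro set_integral_mono set_integrable_subset[OF integrable01_tail_fun]) (auto simp: set_integrable_def)
  then show ?case by (simp add: tail_fun_Suc tail_op_def)
qed simp

lemma tail_fun_eq_0: "1 \<le> k \<Longrightarrow> x \<in> {0..1} \<Longrightarrow> (\<phi> ^^ k) x \<ge> 1 \<Longrightarrow> tail_fun \<phi> k x = 0"
  unfolding tail_fun_def by (rule tail_op_funpow_eq_0)

lemma tail_fun_N: "x \<in> {0..1} \<Longrightarrow> tail_fun \<phi> N x = 0"
  by (simp add: tail_fun_def tail_op_nilpotent)

lemma tail_fun_pos: "x \<in> {0..1} \<Longrightarrow> (\<phi> ^^ k) x < 1 \<Longrightarrow> 0 < tail_fun \<phi> k x"
proof (induction k arbitrary: x)
  case (Suc k)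
  define y where "y = \<phi> x"
  have y: "y \<in> {0..1}" using phi_in_01[OF Suc.prems(1)] y_def by simp
  have pk: "(\<phi> ^^ k) y < 1"
    using Suc.prems(2) y_def by (simp add: funpow_Suc_right del: funpow.simps)
  then have y1: "y < 1" using funpow_phi_1[of k] y by (cases "y = 1") auto
  have "continuous_on {0..1} (\<lambda>t. 1 - (\<phi> ^^ k) t)"
    by (intro continuous_intros continuous_on_funpow_phi)
  moreover have "0 < 1 - (\<phi> ^^ k) y" using pk by simp
  ultimately obtain d where d: "d > 0" "\<And>t. t \<in> {0..1} \<Longrightarrow> dist t y < d \<Longrightarrow> 0 < 1 - (\<phi> ^^ k) t"
    using continuous_on_pos_near[of "{0..1}" "\<lambda>t. 1 - (\<phi> ^^ k) t" y] y by blast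
  have "0 < (LINT t:{y<..1}|lborel. tail_fun \<phi> k t)"
  proof (rule set_integral_pos_if_pos_on_interval)
    show "set_integrable lborel {y<..1} (tail_fun \<phi> k)"
      using y by (intro set_integrable_subset[OF integrable01_tail_fun]) auto
    show "y < min 1 (y + d)" using y1 d by auto
    fix t
    show "t \<in> {y<..1} \<Longrightarrow> 0 \<le> tail_fun \<phi> k t" using y by (intro tail_fun_nonneg) auto
    assume t: "t \<in> {y<..<min 1 (y + d)}"
    then have "t \<in> {0..1}" "dist t y < d" using y by (auto simp: dist_real_def)
    then show "0 < tail_fun \<phi> k t" using d(2) by (intro Suc.IH) auto
  qed auto
  then show ?case by (simp add: tail_fun_Suc tail_op_def y_def)
qed simp

lemma integral01_tail_fun_last_pos: "0 < integral01 (tail_fun \<phi> (N - 1))"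
proof -
  have "0 < tail_fun \<phi> (N - 1) 0" by (intro tail_fun_pos funpow_phi_0_lt_1) auto
  then obtain d where d: "d > 0" "\<And>t. t \<in> {0..1} \<Longrightarrow> dist t 0 < d \<Longrightarrow> 0 < tail_fun \<phi> (N - 1) t"
    using continuous_on_pos_near[OF continuous_on_tail_fun] by force
  show ?thesis
  proof (rule set_integral_pos_if_pos_on_interval[OF integrable01_tail_fun tail_fun_nonneg])
    show "0 < min 1 d" using d by auto
    fix t assume "t \<in> {0<..<min 1 d}"
    then show "0 < tail_fun \<phi> (N - 1) t" using d(2) by (auto simp: dist_real_def)
  qed auto
qed

lemma first_point_funpow_phi_reaches_1:
  assumes j: "1 \<le> j" "j < N"
  obtains e where "0 < e" "e < 1" "(\<phi> ^^ j) e \<ge> 1" "\<And>x. x \<in> {0..<e} \<Longrightarrow> (\<phi> ^^ j) x < 1"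
proof -
  define S where "S = {0..1} \<inter> (\<phi> ^^ j) -` {1..}"
  have clS: "closed S" unfolding S_def
    by (rule continuous_closed_preimage[OF continuous_on_funpow_phi]) auto
  have "(\<phi> ^^ j) (1 - \<epsilon>) = (\<phi> ^^ (j - 1 + 1)) (1 - \<epsilon>)" using j by simp
  also have "\<dots> = (\<phi> ^^ (j - 1)) (\<phi> (1 - \<epsilon>))" by (simp only: Suc_eq_plus1[symmetric] funpow_Suc_right o_apply)
  also have "\<dots> = 1" using eps funpow_phi_1 by simp
  finally have eS: "1 - \<epsilon> \<in> S" unfolding S_def using eps j by auto
  have bS: "bdd_below S" unfolding S_def by (rule bdd_belowI[of _ 0]) auto
  have eInS: "Inf S \<in> S" using closed_contains_Inf[OF _ bS clS] eS by auto
  have "(\<phi> ^^ j) 0 < 1" using j by (intro funpow_phi_0_lt_1) auto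
  then have "Inf S \<noteq> 0" using eInS unfolding S_def by auto
  then have pos: "0 < Inf S" using eInS unfolding S_def by auto
  have lt1: "Inf S < 1" using cInf_lower[OF eS bS] eps by linarith
  have ge1: "(\<phi> ^^ j) (Inf S) \<ge> 1" using eInS unfolding S_def by auto
  have below: "(\<phi> ^^ j) x < 1" if x: "x \<in> {0..<Inf S}" for x
  proof (rule ccontr)
    assume "\<not> (\<phi> ^^ j) x < 1"
    then have "x \<in> S" using x lt1 unfolding S_def by auto
    then show False using cInf_lower[OF _ bS, of x] x by auto
  qed
  show ?thesis by (rule that[OF pos lt1 ge1 below])
qed

lemma interval_where_funpow_phi_reaches_1:
  assumes j: "j < N"
  obtains u v where "0 \<le> u" "u < v" "v \<le> 1"
    "\<And>x. x \<in> {u<..<v} \<Longrightarrow> (\<phi> ^^ j) x < 1 \<and> 1 \<le> (\<phi> ^^ Suc j) x"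
proof (cases "j = 0")
  case True
  have "1 \<le> \<phi> x" if "x \<in> {1 - \<epsilon><..<1}" for x
    using that eps phi_mono[of "1 - \<epsilon>" x] by auto
  then show ?thesis using that[of "1 - \<epsilon>" 1] True eps by auto
next
  case False
  obtain e where e: "0 < e" "e < 1" "(\<phi> ^^ j) e \<ge> 1" "\<And>x. x \<in> {0..<e} \<Longrightarrow> (\<phi> ^^ j) x < 1"
    using first_point_funpow_phi_reaches_1[of j] j False by auto
  txt \<open>Since \<open>\<phi>(e) > e\<close>, points slightly left of \<open>e\<close> are still mapped beyond \<open>e\<close>.\<close>
  have "0 < \<phi> e - e" using above e by auto
  moreover have "continuous_on {0..1} (\<lambda>x. \<phi> x - e)" by (intro continuous_intros cont)
  moreover have "e \<in> {0..1}" using e by auto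
  ultimately obtain d where d: "d > 0" "\<And>x. x \<in> {0..1} \<Longrightarrow> dist x e < d \<Longrightarrow> 0 < \<phi> x - e"
    using continuous_on_pos_near[of "{0..1}" "\<lambda>x. \<phi> x - e" e] by blast
  have "(\<phi> ^^ j) x < 1 \<and> 1 \<le> (\<phi> ^^ Suc j) x" if x: "x \<in> {max 0 (e - d)<..<e}" for x
  proof
    show "(\<phi> ^^ j) x < 1" using x e(4) by auto
    have "e < \<phi> x" using x e d(2)[of x] by (auto simp: dist_real_def)
    then have "(\<phi> ^^ j) e \<le> (\<phi> ^^ j) (\<phi> x)" using x e phi_in_01[of x] by (intro funpow_phi_mono) auto
    then show "1 \<le> (\<phi> ^^ Suc j) x" using e(3) by (simp add: funpow_Suc_right del: funpow.simps)
  qed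
  then show ?thesis using that[of "max 0 (e - d)" e] e d by auto
qed

text \<open>The functions \<open>h\<^sub>k\<close> are linearly independent modulo null sets: on the interval where
  \<open>\<phi>\<^sup>j < 1 \<le> \<phi>\<^sup>j\<^sup>+\<^sup>1\<close>, \<open>h\<^sub>j\<close> is positive while \<open>h\<^sub>k\<close> vanishes for \<open>k > j\<close>.\<close>

lemma tail_fun_lin_indep:
  assumes ae: "AE x in lborel. x \<in> {0..1} \<longrightarrow> (\<Sum>k<N. a k * complex_of_real (tail_fun \<phi> k x)) = 0"
  shows "\<forall>k<N. a k = 0"
proof -
  have "j < N \<longrightarrow> a j = 0" for j
  proof (induction j rule: less_induct)
    case (less j)
    show ?case
    proof
      assume j: "j < N"
      obtain u v where uv: "0 \<le> u" "u < v" "v \<le> 1"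
        and reg: "\<And>x. x \<in> {u<..<v} \<Longrightarrow> (\<phi> ^^ j) x < 1 \<and> 1 \<le> (\<phi> ^^ Suc j) x"
        using interval_where_funpow_phi_reaches_1[OF j] by blast
      obtain x where x: "x \<in> {u<..<v}" "x \<in> {0..1} \<longrightarrow> (\<Sum>k<N. a k * complex_of_real (tail_fun \<phi> k x)) = 0"
        using AE_lborel_ex_in_interval[OF ae uv(2)] by blast
      have x01: "x \<in> {0..1}" using x uv by auto
      have others: "a k * complex_of_real (tail_fun \<phi> k x) = 0" if k: "k \<in> {..<N} - {j}" for k
      proof (cases "k < j")
        case False
        then have "1 \<le> (\<phi> ^^ k) x"
          using k funpow_phi_ge_1_mono[OF x01, of "Suc j" k] reg[OF x(1)] by auto
        then show ?thesis using False k by (simp add: tail_fun_eq_0[OF _ x01])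
      qed (use less.IH j in auto)
      have "(\<Sum>k<N. a k * complex_of_real (tail_fun \<phi> k x))
          = a j * complex_of_real (tail_fun \<phi> j x) + (\<Sum>k\<in>{..<N} - {j}. a k * complex_of_real (tail_fun \<phi> k x))"
        using j by (simp add: sum.remove[of "{..<N}" j])
      also have "(\<Sum>k\<in>{..<N} - {j}. a k * complex_of_real (tail_fun \<phi> k x)) = 0"
        using others by (rule sum.neutral[OF ballI])
      finally have "(\<Sum>k<N. a k * complex_of_real (tail_fun \<phi> k x)) = a j * complex_of_real (tail_fun \<phi> j x)"
        by simp
      moreover have "0 < tail_fun \<phi> j x" using reg[OF x(1)] by (intro tail_fun_pos[OF x01]) auto
      ultimately show "a j = 0" using x x01 by simp
    qed
  qed
  then show ?thesis by auto
qed

end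

definition tail_comb :: "(real \<Rightarrow> real) \<Rightarrow> nat \<Rightarrow> (nat \<Rightarrow> complex) \<Rightarrow> real \<Rightarrow> complex" where
  "tail_comb \<phi> N c x = (\<Sum>k<N. c k * complex_of_real (tail_fun \<phi> k x))"

definition shift_coeffs :: "(nat \<Rightarrow> complex) \<Rightarrow> nat \<Rightarrow> complex" where
  "shift_coeffs c k = (if k = 0 then 0 else c (k - 1))"

text \<open>The action of \<open>V\<^sub>\<phi> - \<mu>\<close> on coefficients with respect to \<open>h\<^sub>0, \<dots>, h\<^sub>N\<^sub>-\<^sub>1\<close>:
  \<open>V\<^sub>\<phi> (\<Sum> c\<^sub>k h\<^sub>k) = (\<Sum> c\<^sub>j \<ell> h\<^sub>j) h\<^sub>0 - \<Sum> c\<^sub>k h\<^sub>k\<^sub>+\<^sub>1\<close>, because \<open>h\<^sub>0 = 1\<close>, \<open>T h\<^sub>k = h\<^sub>k\<^sub>+\<^sub>1\<close>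
  and \<open>h\<^sub>N = 0\<close>.\<close>

definition coeff_op :: "(real \<Rightarrow> real) \<Rightarrow> nat \<Rightarrow> complex \<Rightarrow> (nat \<Rightarrow> complex) \<Rightarrow> nat \<Rightarrow> complex" where
  "coeff_op \<phi> N \<mu> c k =
     (if k = 0 then (\<Sum>j<N. c j * complex_of_real (integral01 (tail_fun \<phi> j))) else 0)
     - shift_coeffs c k - \<mu> * c k"

definition V_minus :: "(real \<Rightarrow> real) \<Rightarrow> complex \<Rightarrow> (real \<Rightarrow> complex) \<Rightarrow> real \<Rightarrow> complex" where
  "V_minus \<phi> \<mu> = (\<lambda>g x. Vop \<phi> g x - \<mu> * g x)"

definition ae01_eq :: "(real \<Rightarrow> complex) \<Rightarrow> (real \<Rightarrow> complex) \<Rightarrow> bool" where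
  "ae01_eq f g \<longleftrightarrow> (AE x in lborel. x \<in> {0..1} \<longrightarrow> f x = g x)"

lemma ae01_eq_refl: "ae01_eq f f"
  by (simp add: ae01_eq_def)

lemma ae01_eq_trans: "ae01_eq f g \<Longrightarrow> ae01_eq g h \<Longrightarrow> ae01_eq f h"
  unfolding ae01_eq_def by (erule (1) eventually_elim2) auto

lemma ae01_eq_if_eq_on: "(\<And>x. x \<in> {0..1} \<Longrightarrow> f x = g x) \<Longrightarrow> ae01_eq f g"
  unfolding ae01_eq_def by auto

lemma ae01_zero_iff_ae01_eq: "ae01_zero f \<longleftrightarrow> ae01_eq f (\<lambda>_. 0)"
  unfolding ae01_zero_def ae01_eq_def ..

lemma ae01_lin_indep_cong:
  assumes len: "length fs = length gs" and eq: "\<And>i. i < length fs \<Longrightarrow> ae01_eq (fs ! i) (gs ! i)"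
  shows "ae01_lin_indep fs \<longleftrightarrow> ae01_lin_indep gs"
proof -
  have ae: "AE x in lborel. \<forall>i\<in>{..<length fs}. x \<in> {0..1} \<longrightarrow> (fs ! i) x = (gs ! i) x"
    using eq unfolding ae01_eq_def by (intro eventually_ball_finite) auto
  have "ae01_zero (\<lambda>x. \<Sum>i<length fs. c i * (fs ! i) x) \<longleftrightarrow> ae01_zero (\<lambda>x. \<Sum>i<length gs. c i * (gs ! i) x)"
    for c
    unfolding ae01_zero_def
  proof (rule eventually_subst)
    show "AE x in lborel. (x \<in> {0..1} \<longrightarrow> (\<Sum>i<length fs. c i * (fs ! i) x) = 0)
        = (x \<in> {0..1} \<longrightarrow> (\<Sum>i<length gs. c i * (gs ! i) x) = 0)"
      using ae
    proof eventually_elim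
      case (elim x)
      then have "x \<in> {0..1} \<Longrightarrow> (\<Sum>i<length fs. c i * (fs ! i) x) = (\<Sum>i<length gs. c i * (gs ! i) x)"
        using len by (intro sum.cong) auto
      then show ?case by (cases "x \<in> {0..1}") simp_all
    qed
  qed
  then show ?thesis unfolding ae01_lin_indep_def using len by simp
qed

lemma tail_comb_linear:
  "tail_comb \<phi> N (\<lambda>k. u k + a * v k) x = tail_comb \<phi> N u x + a * tail_comb \<phi> N v x"
  unfolding tail_comb_def by (simp add: algebra_simps sum.distrib sum_distrib_left)

lemma tail_comb_zero [simp]: "tail_comb \<phi> N (\<lambda>_. 0) = (\<lambda>_. 0)"
  unfolding tail_comb_def by (simp add: fun_eq_iff)

lemma sum_tail_comb:
  "(\<Sum>i<L. c i * tail_comb \<phi> N (g i) x) = tail_comb \<phi> N (\<lambda>k. \<Sum>i<L. c i * g i k) x"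
  unfolding tail_comb_def
  by (simp add: sum_distrib_left sum_distrib_right mult.assoc) (rule sum.swap)

lemma tail_comb_cong: "(\<And>k. k < N \<Longrightarrow> c k = d k) \<Longrightarrow> tail_comb \<phi> N c x = tail_comb \<phi> N d x"
  unfolding tail_comb_def by (intro sum.cong) auto

context volterra_setting
begin

lemma continuous_on_tail_comb: "continuous_on {0..1} (tail_comb \<phi> N c)"
  unfolding tail_comb_def
  by (intro continuous_on_sum continuous_on_mult continuous_on_const continuous_on_of_real
      continuous_on_tail_fun)

lemma integrable01_tail_comb: "integrable01 (tail_comb \<phi> N c)"
  by (rule integrable01_if_continuous_on[OF continuous_on_tail_comb])

lemma tail_comb_in_L2_01: "tail_comb \<phi> N c \<in> L2_01"
  by (rule in_L2_01_if_continuous_on[OF continuous_on_tail_comb])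

lemma tail_comb_unit0: "tail_comb \<phi> N (\<lambda>k. if k = 0 then s else 0) x = s"
proof -
  have "tail_comb \<phi> N (\<lambda>k. if k = 0 then s else 0) x
      = (\<Sum>k<N. if k = 0 then s * complex_of_real (tail_fun \<phi> k x) else 0)"
    unfolding tail_comb_def by (intro sum.cong) auto
  then show ?thesis using N_pos by simp
qed

lemma tail_comb_ae01_zero_iff: "ae01_zero (tail_comb \<phi> N u) \<longleftrightarrow> (\<forall>i<N. u i = 0)"
proof
  assume "ae01_zero (tail_comb \<phi> N u)"
  then show "\<forall>i<N. u i = 0" unfolding ae01_zero_def tail_comb_def by (rule tail_fun_lin_indep)
next
  assume "\<forall>i<N. u i = 0"
  then have "tail_comb \<phi> N u = tail_comb \<phi> N (\<lambda>_. 0)" by (intro ext tail_comb_cong) auto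
  then show "ae01_zero (tail_comb \<phi> N u)" by (simp add: ae01_zero_def)
qed

lemma tail_op_tail_comb:
  assumes x: "x \<in> {0..1}"
  shows "tail_op \<phi> (tail_comb \<phi> N c) x = tail_comb \<phi> N (shift_coeffs c) x"
proof -
  have sub: "{\<phi> x<..1} \<subseteq> {0..1}" using phi_in_01[OF x] by auto
  have "tail_op \<phi> (tail_comb \<phi> N c) x
      = (\<Sum>k<N. LINT t:{\<phi> x<..1}|lborel. c k * complex_of_real (tail_fun \<phi> k t))"
    unfolding tail_op_def tail_comb_def
    by (intro set_integral_sum set_integrable_subset[OF _ _ sub] set_integrable_mult_right
        integrable01_if_continuous_on continuous_on_of_real continuous_on_tail_fun) auto
  also have "\<dots> = (\<Sum>k<N. c k * complex_of_real (tail_fun \<phi> (Suc k) x))"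
    using tail_op_of_real[of \<phi> "tail_fun \<phi> _" x]
    by (simp add: tail_op_def set_integral_mult_right tail_fun_Suc)
  also have "\<dots> = (\<Sum>k<Suc N. shift_coeffs c k * complex_of_real (tail_fun \<phi> k x))"
    by (subst sum.lessThan_Suc_shift) (simp add: shift_coeffs_def)
  also have "\<dots> = tail_comb \<phi> N (shift_coeffs c) x"
    using tail_fun_N[OF x] by (simp add: tail_comb_def)
  finally show ?thesis .
qed

lemma integral01_tail_comb:
  "integral01 (tail_comb \<phi> N c) = (\<Sum>j<N. c j * complex_of_real (integral01 (tail_fun \<phi> j)))"
proof -
  have "integral01 (tail_comb \<phi> N c) = (\<Sum>k<N. LINT t:{0..1}|lborel. c k * complex_of_real (tail_fun \<phi> k t))"
    unfolding tail_comb_def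
    by (intro set_integral_sum set_integrable_mult_right integrable01_if_continuous_on
        continuous_on_of_real continuous_on_tail_fun)
  then show ?thesis by (simp add: set_integral_mult_right set_integral_complex_of_real)
qed

lemma V_minus_tail_comb:
  assumes x: "x \<in> {0..1}"
  shows "V_minus \<phi> \<mu> (tail_comb \<phi> N c) x = tail_comb \<phi> N (coeff_op \<phi> N \<mu> c) x"
proof -
  define s where "s = (\<Sum>j<N. c j * complex_of_real (integral01 (tail_fun \<phi> j)))"
  have "coeff_op \<phi> N \<mu> c = (\<lambda>k. (\<lambda>k. (if k = 0 then s else 0) + (-1) * shift_coeffs c k) k + (- \<mu>) * c k)"
    unfolding coeff_op_def s_def by (auto simp: fun_eq_iff)
  then have "tail_comb \<phi> N (coeff_op \<phi> N \<mu> c) x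
      = s - tail_comb \<phi> N (shift_coeffs c) x - \<mu> * tail_comb \<phi> N c x"
    by (simp only: tail_comb_linear tail_comb_unit0) simp
  also have "\<dots> = V_minus \<phi> \<mu> (tail_comb \<phi> N c) x"
    using Vop_eq_integral01_minus_tail_op[OF integrable01_tail_comb x] tail_op_tail_comb[OF x]
    by (simp add: V_minus_def integral01_tail_comb s_def)
  finally show ?thesis ..
qed

lemma integrable01_V_minus: "integrable01 g \<Longrightarrow> integrable01 (V_minus \<phi> \<mu> g)"
  unfolding V_minus_def by (intro set_integral_diff(1) integrable01_Vop set_integrable_mult_right)

lemma integrable01_V_minus_funpow: "integrable01 g \<Longrightarrow> integrable01 ((V_minus \<phi> \<mu> ^^ k) g)"
  by (induction k) (auto intro: integrable01_V_minus)

lemma V_minus_cong_ae01: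
  assumes f: "integrable01 f" and g: "integrable01 g" and fg: "ae01_eq f g"
  shows "ae01_eq (V_minus \<phi> \<mu> f) (V_minus \<phi> \<mu> g)"
proof -
  have "\<And>x. x \<in> {0..1} \<Longrightarrow> Vop \<phi> f x = Vop \<phi> g x"
    using Vop_cong_ae01[OF f g] fg unfolding ae01_eq_def by blast
  then show ?thesis using fg unfolding ae01_eq_def V_minus_def by (auto elim: eventually_mono)
qed

lemma V_minus_funpow_cong_ae01:
  assumes f: "integrable01 f" and g: "integrable01 g" and fg: "ae01_eq f g"
  shows "ae01_eq ((V_minus \<phi> \<mu> ^^ k) f) ((V_minus \<phi> \<mu> ^^ k) g)"
proof (induction k)
  case (Suc k)
  then show ?case
    using V_minus_cong_ae01[OF integrable01_V_minus_funpow[OF f] integrable01_V_minus_funpow[OF g]]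
    by simp
qed (use fg in simp)

lemma V_minus_funpow_tail_comb:
  "x \<in> {0..1} \<Longrightarrow> (V_minus \<phi> \<mu> ^^ k) (tail_comb \<phi> N c) x = tail_comb \<phi> N ((coeff_op \<phi> N \<mu> ^^ k) c) x"
proof (induction k arbitrary: x)
  case (Suc k)
  have "(V_minus \<phi> \<mu> ^^ Suc k) (tail_comb \<phi> N c) x = V_minus \<phi> \<mu> ((V_minus \<phi> \<mu> ^^ k) (tail_comb \<phi> N c)) x"
    by simp
  also have "\<dots> = V_minus \<phi> \<mu> (tail_comb \<phi> N ((coeff_op \<phi> N \<mu> ^^ k) c)) x"
    using Vop_cong_ae01[OF integrable01_V_minus_funpow[OF integrable01_tail_comb] integrable01_tail_comb Suc.prems]
      Suc.IH Suc.prems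
    by (simp add: V_minus_def)
  also have "\<dots> = tail_comb \<phi> N ((coeff_op \<phi> N \<mu> ^^ Suc k) c) x"
    using V_minus_tail_comb[OF Suc.prems] by simp
  finally show ?case .
qed simp

lemma tail_op_funpow_tail_comb:
  "x \<in> {0..1} \<Longrightarrow> (tail_op \<phi> ^^ m) (tail_comb \<phi> N c) x = tail_comb \<phi> N ((shift_coeffs ^^ m) c) x"
proof (induction m arbitrary: x)
  case (Suc m)
  have "(tail_op \<phi> ^^ Suc m) (tail_comb \<phi> N c) x = tail_op \<phi> ((tail_op \<phi> ^^ m) (tail_comb \<phi> N c)) x"
    by simp
  also have "\<dots> = tail_op \<phi> (tail_comb \<phi> N ((shift_coeffs ^^ m) c)) x"
    by (rule tail_op_cong_ae01[OF integrable01_tail_op_funpow[OF integrable01_tail_comb]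
          integrable01_tail_comb Suc.prems]) (use Suc.IH in auto)
  also have "\<dots> = tail_comb \<phi> N ((shift_coeffs ^^ Suc m) c) x"
    using tail_op_tail_comb[OF Suc.prems] by simp
  finally show ?case .
qed simp

lemma tail_op_funpow_cong_ae01:
  fixes f g :: "real \<Rightarrow> complex"
  assumes f: "integrable01 f" and g: "integrable01 g" and fg: "ae01_eq f g"
    and "1 \<le> m" "x \<in> {0..1}"
  shows "(tail_op \<phi> ^^ m) f x = (tail_op \<phi> ^^ m) g x"
  using assms(4,5)
proof (induction m arbitrary: x rule: nat_induct_at_least)
  case base
  then show ?case using tail_op_cong_ae01[OF f g _ fg[unfolded ae01_eq_def]] by simp
next
  case (Suc m)
  then show ?case
    by (simp only: funpow.simps(2) o_apply)
      (rule tail_op_cong_ae01[OF integrable01_tail_op_funpow[OF f] integrable01_tail_op_funpow[OF g]],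
        auto)
qed

lemma tail_op_funpow_linear:
  fixes f g :: "real \<Rightarrow> complex"
  assumes f: "integrable01 f" and g: "integrable01 g"
  shows "x \<in> {0..1} \<Longrightarrow>
    (tail_op \<phi> ^^ m) (\<lambda>t. a * f t + b * g t) x = a * (tail_op \<phi> ^^ m) f x + b * (tail_op \<phi> ^^ m) g x"
proof (induction m arbitrary: x)
  case (Suc m)
  let ?T = "tail_op \<phi> ^^ m"
  have "(tail_op \<phi> ^^ Suc m) (\<lambda>t. a * f t + b * g t) x = tail_op \<phi> (?T (\<lambda>t. a * f t + b * g t)) x"
    by simp
  also have "\<dots> = tail_op \<phi> (\<lambda>t. a * ?T f t + b * ?T g t) x"
    using Suc.IH
    by (intro tail_op_cong_ae01 Suc.prems integrable01_tail_op_funpow set_integral_add(1)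
        set_integrable_mult_right f g) auto
  also have "\<dots> = a * (tail_op \<phi> ^^ Suc m) f x + b * (tail_op \<phi> ^^ Suc m) g x"
    using tail_op_linear[OF integrable01_tail_op_funpow[OF f] integrable01_tail_op_funpow[OF g] Suc.prems]
    by simp
  finally show ?case .
qed simp

text \<open>For \<open>\<mu> \<noteq> 0\<close>: if \<open>(V\<^sub>\<phi> - \<mu>) f \<in> W\<close> then \<open>f \<in> W\<close>. Indeed \<open>f = (z - T f) / \<mu>\<close> with
  \<open>z \<in> W\<close>; substituting this identity into itself \<open>m\<close> times gives
  \<open>f \<in> W + (-1/\<mu>)\<^sup>m T\<^sup>m f\<close>, and \<open>T\<^sup>N = 0\<close>.\<close>

lemma tail_span_if_V_minus_in_tail_span:
  fixes f :: "real \<Rightarrow> complex"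
  assumes f: "integrable01 f" and \<mu>: "\<mu> \<noteq> 0" and fw: "ae01_eq (V_minus \<phi> \<mu> f) (tail_comb \<phi> N w)"
  shows "\<exists>u. ae01_eq f (tail_comb \<phi> N u)"
proof -
  define z where "z = (\<lambda>k. (if k = 0 then integral01 f else 0) + (-1) * w k)"
  define g where "g = (\<lambda>t. (1/\<mu>) * tail_comb \<phi> N z t + (-1/\<mu>) * tail_op \<phi> f t)"
  have g_int: "integrable01 g"
    unfolding g_def
    by (intro set_integral_add(1) set_integrable_mult_right integrable01_tail_comb integrable01_tail_op f)
  have fg: "ae01_eq f g"
    using fw unfolding ae01_eq_def
  proof (eventually_elim, intro impI)
    fix x :: real assume h: "x \<in> {0..1} \<longrightarrow> V_minus \<phi> \<mu> f x = tail_comb \<phi> N w x" and x: "x \<in> {0..1}"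
    have "tail_comb \<phi> N z x = integral01 f - tail_comb \<phi> N w x"
      unfolding z_def tail_comb_linear tail_comb_unit0 by simp
    then have "\<mu> * f x = tail_comb \<phi> N z x - tail_op \<phi> f x"
      using h x Vop_eq_integral01_minus_tail_op[OF f x] by (simp add: V_minus_def algebra_simps)
    then show "f x = g x" unfolding g_def using \<mu> by (simp add: field_simps)
  qed
  have "\<exists>u. ae01_eq f (\<lambda>x. tail_comb \<phi> N u x + (-1/\<mu>)^m * (tail_op \<phi> ^^ m) f x)" for m
  proof (induction m)
    case 0
    show ?case by (rule exI[of _ "\<lambda>_. 0"]) (simp add: ae01_eq_refl)
  next
    case (Suc m)
    then obtain u where u: "ae01_eq f (\<lambda>x. tail_comb \<phi> N u x + (-1/\<mu>)^m * (tail_op \<phi> ^^ m) f x)"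
      by blast
    have Tfg: "ae01_eq ((tail_op \<phi> ^^ m) f) ((tail_op \<phi> ^^ m) g)"
    proof (cases m)
      case (Suc k)
      then show ?thesis
        by (intro ae01_eq_if_eq_on tail_op_funpow_cong_ae01[OF f g_int fg]) auto
    qed (use fg in simp)
    have Tg: "(tail_op \<phi> ^^ m) g x
        = (1/\<mu>) * tail_comb \<phi> N ((shift_coeffs ^^ m) z) x + (-1/\<mu>) * (tail_op \<phi> ^^ Suc m) f x"
      if x: "x \<in> {0..1}" for x
    proof -
      have "(tail_op \<phi> ^^ m) g x
          = (1/\<mu>) * (tail_op \<phi> ^^ m) (tail_comb \<phi> N z) x + (-1/\<mu>) * (tail_op \<phi> ^^ m) (tail_op \<phi> f) x"
        unfolding g_def by (rule tail_op_funpow_linear[OF integrable01_tail_comb integrable01_tail_op[OF f] x])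
      also have "(tail_op \<phi> ^^ m) (tail_op \<phi> f) = (tail_op \<phi> ^^ Suc m) f"
        by (simp add: funpow_Suc_right del: funpow.simps)
      finally show ?thesis using tail_op_funpow_tail_comb[OF x] by simp
    qed
    define u' where "u' = (\<lambda>k. u k + ((-1/\<mu>)^m * (1/\<mu>)) * (shift_coeffs ^^ m) z k)"
    have "ae01_eq f (\<lambda>x. tail_comb \<phi> N u x + (-1/\<mu>)^m * (tail_op \<phi> ^^ m) g x)"
      using u Tfg unfolding ae01_eq_def by eventually_elim auto
    moreover have "ae01_eq (\<lambda>x. tail_comb \<phi> N u x + (-1/\<mu>)^m * (tail_op \<phi> ^^ m) g x)
        (\<lambda>x. tail_comb \<phi> N u' x + (-1/\<mu>)^Suc m * (tail_op \<phi> ^^ Suc m) f x)"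
    proof (rule ae01_eq_if_eq_on)
      fix x :: real assume x: "x \<in> {0..1}"
      show "tail_comb \<phi> N u x + (-1/\<mu>)^m * (tail_op \<phi> ^^ m) g x
          = tail_comb \<phi> N u' x + (-1/\<mu>)^Suc m * (tail_op \<phi> ^^ Suc m) f x"
        unfolding Tg[OF x] u'_def tail_comb_linear by (simp add: algebra_simps)
    qed
    ultimately show ?case by (blast intro: ae01_eq_trans)
  qed
  then obtain u where u: "ae01_eq f (\<lambda>x. tail_comb \<phi> N u x + (-1/\<mu>)^N * (tail_op \<phi> ^^ N) f x)"
    by blast
  moreover have "ae01_eq (\<lambda>x. tail_comb \<phi> N u x + (-1/\<mu>)^N * (tail_op \<phi> ^^ N) f x) (tail_comb \<phi> N u)"
    by (rule ae01_eq_if_eq_on) (simp add: tail_op_nilpotent)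
  ultimately show ?thesis by (blast intro: ae01_eq_trans)
qed

lemma tail_span_if_gen_eigen:
  "\<mu> \<noteq> 0 \<Longrightarrow> integrable01 f \<Longrightarrow> ae01_zero ((V_minus \<phi> \<mu> ^^ k) f) \<Longrightarrow> \<exists>u. ae01_eq f (tail_comb \<phi> N u)"
proof (induction k arbitrary: f)
  case 0
  then have "ae01_eq f (tail_comb \<phi> N (\<lambda>_. 0))" by (simp add: ae01_zero_iff_ae01_eq)
  then show ?case by blast
next
  case (Suc k)
  have "(V_minus \<phi> \<mu> ^^ Suc k) f = (V_minus \<phi> \<mu> ^^ k) (V_minus \<phi> \<mu> f)"
    by (simp add: funpow_Suc_right del: funpow.simps)
  then obtain w where "ae01_eq (V_minus \<phi> \<mu> f) (tail_comb \<phi> N w)"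
    using Suc.IH[OF Suc.prems(1) integrable01_V_minus[OF Suc.prems(2)]] Suc.prems(3) by auto
  then show ?case by (rule tail_span_if_V_minus_in_tail_span[OF Suc.prems(2,1)])
qed

lemma gen_eigen_coeffs:
  assumes \<mu>: "\<mu> \<noteq> 0" and f: "integrable01 f" and fk: "ae01_zero ((V_minus \<phi> \<mu> ^^ k) f)"
  obtains u where "ae01_eq f (tail_comb \<phi> N u)" "\<forall>i<N. (coeff_op \<phi> N \<mu> ^^ k) u i = 0"
proof -
  obtain u where u: "ae01_eq f (tail_comb \<phi> N u)" using tail_span_if_gen_eigen[OF \<mu> f fk] by blast
  have "ae01_eq ((V_minus \<phi> \<mu> ^^ k) f) ((V_minus \<phi> \<mu> ^^ k) (tail_comb \<phi> N u))"
    by (rule V_minus_funpow_cong_ae01[OF f integrable01_tail_comb u])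
  moreover have "ae01_eq ((V_minus \<phi> \<mu> ^^ k) (tail_comb \<phi> N u)) (tail_comb \<phi> N ((coeff_op \<phi> N \<mu> ^^ k) u))"
    by (rule ae01_eq_if_eq_on) (rule V_minus_funpow_tail_comb)
  ultimately have "ae01_eq ((V_minus \<phi> \<mu> ^^ k) f) (tail_comb \<phi> N ((coeff_op \<phi> N \<mu> ^^ k) u))"
    by (rule ae01_eq_trans)
  then have "ae01_zero (tail_comb \<phi> N ((coeff_op \<phi> N \<mu> ^^ k) u))"
    using fk unfolding ae01_eq_def ae01_zero_def by eventually_elim auto
  then show ?thesis using u that by (simp add: tail_comb_ae01_zero_iff)
qed

lemma gen_eigen_of_coeffs:
  assumes "\<forall>i<N. (coeff_op \<phi> N \<mu> ^^ k) u i = 0"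
  shows "ae01_zero ((V_minus \<phi> \<mu> ^^ k) (tail_comb \<phi> N u))"
  unfolding ae01_zero_def using V_minus_funpow_tail_comb assms by (auto simp: tail_comb_def)

text \<open>An eigenfunction for \<open>0\<close>: any \<open>f\<close> with mean zero supported in \<open>[0, \<phi>(0)]\<close>, since \<open>\<phi> \<ge> \<phi>(0)\<close>.\<close>

lemma zero_in_point_spectrum: "0 \<in> point_spectrum \<phi>"
proof -
  define a where "a = \<phi> 0"
  have a: "0 < a" "a \<le> 1" using pos0 phi_in_01[of 0] a_def by auto
  define r where "r = (\<lambda>t. indicator {0..a/2} t - indicator {a/2<..a} t :: real)"
  define f where "f = (\<lambda>t. complex_of_real (r t))"
  have r_meas: "r \<in> borel_measurable lborel" unfolding r_def by measurable
  have f_L2: "f \<in> L2_01"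
    by (rule in_L2_01_if_bounded[of _ 1]) (use r_meas in \<open>auto simp: f_def r_def indicator_def\<close>)
  have "\<not> ae01_zero f"
  proof
    assume "ae01_zero f"
    then have ae: "AE x in lborel. x \<in> {0..1} \<longrightarrow> f x = 0" unfolding ae01_zero_def .
    obtain x where "x \<in> {0<..<a/2}" "x \<in> {0..1} \<longrightarrow> f x = 0"
      using AE_lborel_ex_in_interval[OF ae, of 0 "a/2"] a by auto
    then show False using a by (auto simp: f_def r_def)
  qed
  moreover have "Vop \<phi> f x = 0" if x: "x \<in> {0..1}" for x
  proof -
    have ax: "a \<le> \<phi> x" unfolding a_def using x by (intro phi_mono) auto
    have int_ind: "integrable lborel (indicat_real S)" if "S \<in> {{0..a/2}, {a/2<..a}}" for S
      using that a by (auto intro!: integrable_real_indicator)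
    have "(LINT t:{0..\<phi> x}|lborel. r t) = (LINT t|lborel. indicator {0..a/2} t - indicator {a/2<..a} t)"
      unfolding set_lebesgue_integral_def r_def
      by (rule Bochner_Integration.integral_cong) (use ax a in \<open>auto simp: indicator_def\<close>)
    also have "\<dots> = 0"
      using a int_ind by (simp add: Bochner_Integration.integral_diff integral_indicator)
    finally show ?thesis unfolding Vop_def f_def by (simp add: set_integral_complex_of_real)
  qed
  then have "ae01_zero (\<lambda>x. Vop \<phi> f x - 0 * f x)" unfolding ae01_zero_def by auto
  ultimately show ?thesis unfolding point_spectrum_def using f_L2 by blast
qed

end

definition coeff_mat :: "(real \<Rightarrow> real) \<Rightarrow> nat \<Rightarrow> complex mat" where
  "coeff_mat \<phi> N = mat N N (\<lambda>(i, j).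
     (if i = 0 then complex_of_real (integral01 (tail_fun \<phi> j)) else 0) - (if i = Suc j then 1 else 0))"

lemma coeff_mat_carrier: "coeff_mat \<phi> N \<in> carrier_mat N N" by (simp add: coeff_mat_def)

lemma coeff_op_cong: "(\<And>i. i < N \<Longrightarrow> c i = d i) \<Longrightarrow> i < N \<Longrightarrow> coeff_op \<phi> N \<mu> c i = coeff_op \<phi> N \<mu> d i"
  unfolding coeff_op_def shift_coeffs_def by (auto intro!: sum.cong)

lemma coeff_op_funpow_cong: "(\<And>i. i < N \<Longrightarrow> c i = d i) \<Longrightarrow> i < N \<Longrightarrow> (coeff_op \<phi> N \<mu> ^^ k) c i = (coeff_op \<phi> N \<mu> ^^ k) d i"
proof (induction k arbitrary: i)
  case 0 then show ?case by simp
next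
  case (Suc k)
  have "\<And>j. j < N \<Longrightarrow> (coeff_op \<phi> N \<mu> ^^ k) c j = (coeff_op \<phi> N \<mu> ^^ k) d j" using Suc.IH Suc.prems(1) by blast
  then show ?case by (simp only: funpow.simps(2) o_apply) (rule coeff_op_cong[OF _ Suc.prems(2)])
qed

lemma coeff_op_zero: "coeff_op \<phi> N \<mu> (\<lambda>_. 0) = (\<lambda>_. 0)"
  unfolding coeff_op_def shift_coeffs_def by (auto simp: fun_eq_iff)

lemma coeff_op_funpow_zero: "(coeff_op \<phi> N \<mu> ^^ k) (\<lambda>_. 0) = (\<lambda>_. 0)"
  by (induction k) (auto simp: coeff_op_zero)

lemma coeff_op_funpow_vanish_mono:
  assumes z: "\<forall>j<N. (coeff_op \<phi> N \<mu> ^^ k) u j = 0" and kk: "k \<le> k'"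
  shows "\<forall>j<N. (coeff_op \<phi> N \<mu> ^^ k') u j = 0"
proof (intro allI impI)
  fix j assume j: "j < N"
  have kk': "k' = (k' - k) + k" using kk by simp
  have "(coeff_op \<phi> N \<mu> ^^ k') u = (coeff_op \<phi> N \<mu> ^^ (k' - k)) ((coeff_op \<phi> N \<mu> ^^ k) u)"
    by (subst kk') (simp only: funpow_add o_apply)
  then have "(coeff_op \<phi> N \<mu> ^^ k') u j = (coeff_op \<phi> N \<mu> ^^ (k' - k)) (\<lambda>_. 0) j"
    using coeff_op_funpow_cong[where c="(coeff_op \<phi> N \<mu> ^^ k) u" and d="\<lambda>_. 0" and i=j and k="k' - k"] z j by simp
  then show "(coeff_op \<phi> N \<mu> ^^ k') u j = 0" by (simp add: coeff_op_funpow_zero)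
qed

lemma char_matrix_mult_vec:
  assumes v: "v \<in> carrier_vec N" and i: "i < N"
  shows "(char_matrix (coeff_mat \<phi> N) \<mu> *\<^sub>v v) $ i = coeff_op \<phi> N \<mu> (($) v) i"
proof -
  have ent: "char_matrix (coeff_mat \<phi> N) \<mu> $$ (i,j) = (if i = 0 then complex_of_real (integral01 (tail_fun \<phi> j)) else 0)
      - (if i = Suc j then 1 else 0) - (if j = i then \<mu> else 0)" if "j < N" for j
    using i that unfolding char_matrix_def coeff_mat_def by auto
  have C: "char_matrix (coeff_mat \<phi> N) \<mu> \<in> carrier_mat N N" by (rule char_matrix_closed[OF coeff_mat_carrier])
  have "(char_matrix (coeff_mat \<phi> N) \<mu> *\<^sub>v v) $ i = row (char_matrix (coeff_mat \<phi> N) \<mu>) i \<bullet> v"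
    using C i by simp
  also have "\<dots> = (\<Sum>j<N. char_matrix (coeff_mat \<phi> N) \<mu> $$ (i,j) * v $ j)"
    using v i C by (simp add: scalar_prod_def atLeast0LessThan)
  also have "\<dots> = (\<Sum>j<N. ((if i = 0 then complex_of_real (integral01 (tail_fun \<phi> j)) * v $ j else 0)
      - (if i = Suc j then v $ j else 0)) - (if j = i then \<mu> * v $ j else 0))"
    by (rule sum.cong) (auto simp: ent algebra_simps)
  also have "\<dots> = (if i = 0 then (\<Sum>j<N. v $ j * complex_of_real (integral01 (tail_fun \<phi> j))) else 0)
      - shift_coeffs (($) v) i - \<mu> * v $ i"
  proof -
    have s1: "(\<Sum>j<N. (if i = 0 then complex_of_real (integral01 (tail_fun \<phi> j)) * v $ j else 0))
        = (if i = 0 then (\<Sum>j<N. v $ j * complex_of_real (integral01 (tail_fun \<phi> j))) else 0)"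
      by (auto simp: mult.commute)
    have s2: "(\<Sum>j<N. (if i = Suc j then v $ j else 0)) = shift_coeffs (($) v) i"
    proof (cases i)
      case 0 then show ?thesis by (simp add: shift_coeffs_def)
    next
      case (Suc i')
      then have "(\<Sum>j<N. (if i = Suc j then v $ j else 0)) = (\<Sum>j<N. (if j = i' then v $ j else 0))"
        by (intro sum.cong) auto
      also have "\<dots> = v $ i'" using i Suc by simp
      finally show ?thesis using Suc by (simp add: shift_coeffs_def)
    qed
    have s3: "(\<Sum>j<N. (if j = i then \<mu> * v $ j else 0)) = \<mu> * v $ i" using i by simp
    show ?thesis using s1 s2 s3 by (simp add: sum_subtractf)
  qed
  also have "\<dots> = coeff_op \<phi> N \<mu> (($) v) i" unfolding coeff_op_def by simp
  finally show ?thesis .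
qed

lemma char_matrix_pow_mult_vec:
  assumes v: "v \<in> carrier_vec N" and i: "i < N"
  shows "((char_matrix (coeff_mat \<phi> N) \<mu> ^\<^sub>m k) *\<^sub>v v) $ i = (coeff_op \<phi> N \<mu> ^^ k) (($) v) i"
  using v i
proof (induction k arbitrary: v i)
  case 0
  have "dim_row (char_matrix (coeff_mat \<phi> N) \<mu>) = N" by (simp add: char_matrix_def coeff_mat_def)
  then show ?case using 0 by simp
next
  case (Suc k)
  let ?C = "char_matrix (coeff_mat \<phi> N) \<mu>"
  have C: "?C \<in> carrier_mat N N" by (simp add: coeff_mat_carrier)
  have Cv: "?C *\<^sub>v v \<in> carrier_vec N" using C Suc.prems(1) by simp
  have "((?C ^\<^sub>m Suc k) *\<^sub>v v) $ i = ((?C ^\<^sub>m k) *\<^sub>v (?C *\<^sub>v v)) $ i"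
    using C Suc.prems(1) by (simp add: assoc_mult_mat_vec[of _ N N _ N])
  also have "\<dots> = (coeff_op \<phi> N \<mu> ^^ k) (($) (?C *\<^sub>v v)) i" by (rule Suc.IH[OF Cv Suc.prems(2)])
  also have "\<dots> = (coeff_op \<phi> N \<mu> ^^ k) (coeff_op \<phi> N \<mu> (($) v)) i"
    by (rule coeff_op_funpow_cong[OF _ Suc.prems(2)]) (rule char_matrix_mult_vec[OF Suc.prems(1)])
  also have "\<dots> = (coeff_op \<phi> N \<mu> ^^ Suc k) (($) v) i" by (simp add: funpow_Suc_right del: funpow.simps)
  finally show ?case .
qed

context volterra_setting
begin

lemma coeff_op_0_inj:
  assumes z: "\<forall>k<N. coeff_op \<phi> N 0 c k = 0"
  shows "\<forall>k<N. c k = 0"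
proof -
  have low: "c k = 0" if k: "k < N - 1" for k
  proof -
    have "coeff_op \<phi> N 0 c (Suc k) = 0" using z k by auto
    then show ?thesis unfolding coeff_op_def shift_coeffs_def by simp
  qed
  have "coeff_op \<phi> N 0 c 0 = 0" using z N_pos by auto
  then have s: "(\<Sum>j<N. c j * complex_of_real (integral01 (tail_fun \<phi> j))) = 0" unfolding coeff_op_def shift_coeffs_def by simp
  have "(\<Sum>j<N. c j * complex_of_real (integral01 (tail_fun \<phi> j))) = c (N-1) * complex_of_real (integral01 (tail_fun \<phi> (N-1)))"
  proof -
    have "(\<Sum>j<N. c j * complex_of_real (integral01 (tail_fun \<phi> j))) = (\<Sum>j<Suc (N-1). c j * complex_of_real (integral01 (tail_fun \<phi> j)))"
      using N_pos by simp
    also have "\<dots> = (\<Sum>j<N-1. c j * complex_of_real (integral01 (tail_fun \<phi> j))) + c (N-1) * complex_of_real (integral01 (tail_fun \<phi> (N-1)))"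
      by (rule sum.lessThan_Suc)
    also have "(\<Sum>j<N-1. c j * complex_of_real (integral01 (tail_fun \<phi> j))) = 0" using low by simp
    finally show ?thesis by simp
  qed
  moreover have "integral01 (tail_fun \<phi> (N-1)) \<noteq> 0" using integral01_tail_fun_last_pos by simp
  ultimately have "c (N-1) = 0" using s by simp
  then show ?thesis using low N_pos by (metis One_nat_def Suc_pred less_Suc_eq neq0_conv not_less_zero)
qed

lemma mat_trace_coeff_mat: "mat_trace (coeff_mat \<phi> N) = 1"
proof -
  have "mat_trace (coeff_mat \<phi> N) = (\<Sum>i<N. if i = 0 then complex_of_real (integral01 (tail_fun \<phi> 0)) else 0)"
    unfolding mat_trace_def coeff_mat_def by (intro sum.cong) auto
  also have "\<dots> = complex_of_real (integral01 (tail_fun \<phi> 0))" using N_pos by simp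
  also have "integral01 (tail_fun \<phi> 0) = 1" by (subst tail_fun_0, subst set_integral_const) auto
  finally show ?thesis by simp
qed

abbreviation M_char :: "complex \<Rightarrow> complex mat" where
  "M_char \<mu> \<equiv> char_matrix (coeff_mat \<phi> N) \<mu>"

lemma M_char_pow_carrier: "M_char \<mu> ^\<^sub>m k \<in> carrier_mat N N"
  by (intro pow_carrier_mat char_matrix_closed coeff_mat_carrier)

lemma mat_kernel_M_char_pow_iff:
  assumes v: "v \<in> carrier_vec N"
  shows "v \<in> mat_kernel (M_char \<mu> ^\<^sub>m k) \<longleftrightarrow> (\<forall>i<N. (coeff_op \<phi> N \<mu> ^^ k) (($) v) i = 0)"
proof -
  have "M_char \<mu> ^\<^sub>m k *\<^sub>v v = 0\<^sub>v N \<longleftrightarrow> (\<forall>i<N. (M_char \<mu> ^\<^sub>m k *\<^sub>v v) $ i = 0)"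
    using M_char_pow_carrier[of \<mu> k] by (auto simp: vec_eq_iff)
  also have "\<dots> \<longleftrightarrow> (\<forall>i<N. (coeff_op \<phi> N \<mu> ^^ k) (($) v) i = 0)"
    using char_matrix_pow_mult_vec[OF v] by simp
  finally show ?thesis using mat_kernel[OF M_char_pow_carrier] v by simp
qed

lemma vec_in_kernel_if_coeffs:
  assumes "\<forall>i<N. (coeff_op \<phi> N \<mu> ^^ k) u i = 0"
  shows "vec N u \<in> mat_kernel (M_char \<mu> ^\<^sub>m k)"
proof -
  have "(coeff_op \<phi> N \<mu> ^^ k) (($) (vec N u)) i = (coeff_op \<phi> N \<mu> ^^ k) u i" if "i < N" for i
    by (rule coeff_op_funpow_cong[OF _ that]) simp
  then show ?thesis using assms by (simp add: mat_kernel_M_char_pow_iff)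
qed

lemma tail_comb_gen_eigen_if_kernel:
  assumes "v \<in> mat_kernel (M_char \<mu> ^\<^sub>m k)"
  shows "tail_comb \<phi> N (($) v) \<in> gen_eigenspace \<phi> \<mu>"
proof -
  have "v \<in> carrier_vec N" using assms mat_kernel_carrier[OF M_char_pow_carrier] by auto
  then have "ae01_zero ((V_minus \<phi> \<mu> ^^ k) (tail_comb \<phi> N (($) v)))"
    using assms by (intro gen_eigen_of_coeffs) (simp add: mat_kernel_M_char_pow_iff)
  then show ?thesis unfolding gen_eigenspace_def V_minus_def[symmetric] using tail_comb_in_L2_01 by blast
qed

lemma gen_eigen_kernel_coeffs:
  assumes \<mu>: "\<mu> \<noteq> 0" and f: "f \<in> gen_eigenspace \<phi> \<mu>"
  obtains k u where "ae01_eq f (tail_comb \<phi> N u)" "vec N u \<in> mat_kernel (M_char \<mu> ^\<^sub>m k)"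
proof -
  obtain k where "f \<in> L2_01" "ae01_zero ((V_minus \<phi> \<mu> ^^ k) f)"
    using f unfolding gen_eigenspace_def V_minus_def[symmetric] by blast
  then obtain u where "ae01_eq f (tail_comb \<phi> N u)" "\<forall>i<N. (coeff_op \<phi> N \<mu> ^^ k) u i = 0"
    using gen_eigen_coeffs[OF \<mu> L2_01_integrable01] by blast
  then show ?thesis using that vec_in_kernel_if_coeffs by blast
qed

lemma ae01_lin_indep_tail_comb_iff:
  "ae01_lin_indep (map (\<lambda>v. tail_comb \<phi> N (($) v)) vs) \<longleftrightarrow> lin_indep_vecs N vs"
proof -
  have "(\<lambda>x. \<Sum>i<length vs. c i * tail_comb \<phi> N (($) (vs ! i)) x)
      = tail_comb \<phi> N (\<lambda>j. \<Sum>i<length vs. c i * vs ! i $ j)" for c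
    by (simp add: sum_tail_comb)
  then show ?thesis
    unfolding ae01_lin_indep_def lin_indep_vecs_def by (simp add: tail_comb_ae01_zero_iff)
qed

lemma gen_eigen_lin_indep_of_kernel:
  obtains fs where "length fs = kernel_dim (M_char \<mu> ^\<^sub>m k)"
    "set fs \<subseteq> gen_eigenspace \<phi> \<mu>" "ae01_lin_indep fs"
proof -
  obtain vs where vs: "set vs \<subseteq> mat_kernel (M_char \<mu> ^\<^sub>m k)" "lin_indep_vecs N vs"
    "length vs = kernel_dim (M_char \<mu> ^\<^sub>m k)"
    using kernel_dim_lin_indep_vecs[OF M_char_pow_carrier] by blast
  show ?thesis
  proof (rule that)
    show "length (map (\<lambda>v. tail_comb \<phi> N (($) v)) vs) = kernel_dim (M_char \<mu> ^\<^sub>m k)"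
      using vs(3) by simp
    show "set (map (\<lambda>v. tail_comb \<phi> N (($) v)) vs) \<subseteq> gen_eigenspace \<phi> \<mu>"
      using vs(1) tail_comb_gen_eigen_if_kernel by auto
    show "ae01_lin_indep (map (\<lambda>v. tail_comb \<phi> N (($) v)) vs)"
      using vs(2) by (simp add: ae01_lin_indep_tail_comb_iff)
  qed
qed

lemma lin_indep_gen_eigen_le_kernel_dim:
  assumes \<mu>: "\<mu> \<noteq> 0" and fs: "set fs \<subseteq> gen_eigenspace \<phi> \<mu>" "ae01_lin_indep fs"
  obtains K where "length fs \<le> kernel_dim (M_char \<mu> ^\<^sub>m K)"
proof -
  define L where "L = length fs"
  have "\<forall>i. \<exists>ku. i < L \<longrightarrow> ae01_eq (fs ! i) (tail_comb \<phi> N (snd ku))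
      \<and> vec N (snd ku) \<in> mat_kernel (M_char \<mu> ^\<^sub>m fst ku)"
  proof
    fix i
    show "\<exists>ku. i < L \<longrightarrow> ae01_eq (fs ! i) (tail_comb \<phi> N (snd ku))
        \<and> vec N (snd ku) \<in> mat_kernel (M_char \<mu> ^\<^sub>m fst ku)"
    proof (cases "i < L")
      case True
      then have "fs ! i \<in> gen_eigenspace \<phi> \<mu>" using fs(1) unfolding L_def by auto
      then obtain k u where "ae01_eq (fs ! i) (tail_comb \<phi> N u)" "vec N u \<in> mat_kernel (M_char \<mu> ^\<^sub>m k)"
        by (rule gen_eigen_kernel_coeffs[OF \<mu>])
      then show ?thesis by (intro exI[of _ "(k, u)"]) simp
    qed simp
  qed
  from choice[OF this] obtain KU where KU: "\<forall>i. i < L \<longrightarrow> ae01_eq (fs ! i) (tail_comb \<phi> N (snd (KU i)))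
      \<and> vec N (snd (KU i)) \<in> mat_kernel (M_char \<mu> ^\<^sub>m fst (KU i))"
    by blast
  define k where "k i = fst (KU i)" for i
  define U where "U i = snd (KU i)" for i
  have kU: "ae01_eq (fs ! i) (tail_comb \<phi> N (U i))" "vec N (U i) \<in> mat_kernel (M_char \<mu> ^\<^sub>m k i)"
    if "i < L" for i
    using KU that unfolding k_def U_def by auto
  define K where "K = (\<Sum>i<L. k i)"
  define vs where "vs = map (\<lambda>i. vec N (U i)) [0..<L]"
  have vs_ker: "set vs \<subseteq> mat_kernel (M_char \<mu> ^\<^sub>m K)"
  proof
    fix v assume "v \<in> set vs"
    then obtain i where i: "i < L" "v = vec N (U i)" unfolding vs_def by auto
    have "\<forall>j<N. (coeff_op \<phi> N \<mu> ^^ k i) (($) (vec N (U i))) j = 0"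
      using kU(2)[OF i(1)] mat_kernel_M_char_pow_iff[of "vec N (U i)"] by simp
    moreover have "(coeff_op \<phi> N \<mu> ^^ k i) (($) (vec N (U i))) j = (coeff_op \<phi> N \<mu> ^^ k i) (U i) j"
      if "j < N" for j
      by (rule coeff_op_funpow_cong[OF _ that]) simp
    ultimately have "\<forall>j<N. (coeff_op \<phi> N \<mu> ^^ k i) (U i) j = 0" by simp
    then have "\<forall>j<N. (coeff_op \<phi> N \<mu> ^^ K) (U i) j = 0"
      by (rule coeff_op_funpow_vanish_mono) (use i in \<open>auto simp: K_def intro: member_le_sum\<close>)
    then show "v \<in> mat_kernel (M_char \<mu> ^\<^sub>m K)" using i vec_in_kernel_if_coeffs by simp
  qed
  define gs where "gs = map (\<lambda>v. tail_comb \<phi> N (($) v)) vs"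
  have "ae01_eq (fs ! i) (gs ! i)" if i: "i < length fs" for i
  proof -
    have "gs ! i = tail_comb \<phi> N (($) (vec N (U i)))" using i by (simp add: gs_def vs_def L_def)
    also have "\<dots> = tail_comb \<phi> N (U i)" by (intro ext tail_comb_cong) simp
    finally show ?thesis using kU(1) i unfolding L_def by simp
  qed
  then have "ae01_lin_indep gs"
    using fs(2) ae01_lin_indep_cong[of fs gs] by (simp add: gs_def vs_def L_def)
  then have "lin_indep_vecs N vs" unfolding gs_def by (simp add: ae01_lin_indep_tail_comb_iff)
  then have "length vs \<le> kernel_dim (M_char \<mu> ^\<^sub>m K)"
    by (rule lin_indep_vecs_le_kernel_dim[OF M_char_pow_carrier vs_ker])
  then show ?thesis using that by (simp add: vs_def L_def)
qed

lemma has_alg_mult_if_kernel_dims: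
  assumes \<mu>: "\<mu> \<noteq> 0"
    and ub: "\<And>k. kernel_dim (M_char \<mu> ^\<^sub>m k) \<le> m" and eqN: "kernel_dim (M_char \<mu> ^\<^sub>m N) = m"
  shows "has_alg_mult \<phi> \<mu> m"
  unfolding has_alg_mult_def
proof (intro conjI allI impI)
  obtain fs where "length fs = kernel_dim (M_char \<mu> ^\<^sub>m N)"
    "set fs \<subseteq> gen_eigenspace \<phi> \<mu>" "ae01_lin_indep fs"
    by (rule gen_eigen_lin_indep_of_kernel)
  then show "\<exists>fs. length fs = m \<and> set fs \<subseteq> gen_eigenspace \<phi> \<mu> \<and> ae01_lin_indep fs"
    using eqN by blast
next
  fix fs assume "set fs \<subseteq> gen_eigenspace \<phi> \<mu> \<and> ae01_lin_indep fs"
  then obtain K where "length fs \<le> kernel_dim (M_char \<mu> ^\<^sub>m K)"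
    using lin_indep_gen_eigen_le_kernel_dim[OF \<mu>] by blast
  then show "length fs \<le> m" using ub[of K] by simp
qed

lemma point_spectrum_iff_kernel:
  assumes \<mu>: "\<mu> \<noteq> 0"
  shows "\<mu> \<in> point_spectrum \<phi> \<longleftrightarrow> 1 \<le> kernel_dim (M_char \<mu> ^\<^sub>m 1)"
proof
  assume "\<mu> \<in> point_spectrum \<phi>"
  then obtain f where f: "f \<in> L2_01" "\<not> ae01_zero f" "ae01_zero ((V_minus \<phi> \<mu> ^^ 1) f)"
    unfolding point_spectrum_def by (auto simp: V_minus_def)
  then obtain u where u: "ae01_eq f (tail_comb \<phi> N u)" "\<forall>i<N. (coeff_op \<phi> N \<mu> ^^ 1) u i = 0"
    using gen_eigen_coeffs[OF \<mu> L2_01_integrable01] by blast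
  have "vec N u \<noteq> 0\<^sub>v N"
  proof
    assume z: "vec N u = 0\<^sub>v N"
    have "u k = 0" if "k < N" for k using z that by (metis index_vec index_zero_vec(1))
    then have "tail_comb \<phi> N u x = 0" for x by (simp add: tail_comb_def)
    then show False using u(1) f(2) unfolding ae01_eq_def ae01_zero_def by auto
  qed
  moreover have "vec N u \<in> carrier_vec N" "M_char \<mu> ^\<^sub>m 1 *\<^sub>v vec N u = 0\<^sub>v N"
    using mat_kernelD[OF M_char_pow_carrier vec_in_kernel_if_coeffs[OF u(2)]] by auto
  ultimately show "1 \<le> kernel_dim (M_char \<mu> ^\<^sub>m 1)"
    using kernel_dim_pos_iff[OF M_char_pow_carrier] by blast
next
  assume "1 \<le> kernel_dim (M_char \<mu> ^\<^sub>m 1)"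
  then obtain v where v: "v \<in> carrier_vec N" "v \<noteq> 0\<^sub>v N" "M_char \<mu> ^\<^sub>m 1 *\<^sub>v v = 0\<^sub>v N"
    using kernel_dim_pos_iff[OF M_char_pow_carrier] by blast
  have "\<not> ae01_zero (tail_comb \<phi> N (($) v))"
  proof
    assume "ae01_zero (tail_comb \<phi> N (($) v))"
    then have "\<forall>i<N. v $ i = 0" by (simp add: tail_comb_ae01_zero_iff)
    then have "v = 0\<^sub>v N" using v(1) by (intro eq_vecI) auto
    then show False using v(2) by simp
  qed
  moreover have "ae01_zero ((V_minus \<phi> \<mu> ^^ 1) (tail_comb \<phi> N (($) v)))"
  proof (rule gen_eigen_of_coeffs)
    show "\<forall>i<N. (coeff_op \<phi> N \<mu> ^^ 1) (($) v) i = 0"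
      using mat_kernelI[OF M_char_pow_carrier v(1,3)] mat_kernel_M_char_pow_iff[OF v(1)] by blast
  qed
  ultimately show "\<mu> \<in> point_spectrum \<phi>"
    unfolding point_spectrum_def using tail_comb_in_L2_01 by (auto simp: V_minus_def)
qed

lemma kernel_dim_M_char_0: "kernel_dim (M_char 0 ^\<^sub>m 1) = 0"
proof -
  have "v = 0\<^sub>v N" if v: "v \<in> carrier_vec N" "M_char 0 ^\<^sub>m 1 *\<^sub>v v = 0\<^sub>v N" for v
  proof -
    have "\<forall>i<N. (coeff_op \<phi> N 0 ^^ 1) (($) v) i = 0"
      using mat_kernelI[OF M_char_pow_carrier v] mat_kernel_M_char_pow_iff[OF v(1)] by blast
    then have "\<forall>i<N. v $ i = 0" using coeff_op_0_inj by simp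
    then show ?thesis using v(1) by (intro eq_vecI) auto
  qed
  then show ?thesis using kernel_dim_pos_iff[OF M_char_pow_carrier, of 0 1] by auto
qed

end

theorem theorem4p3:
  fixes \<phi> :: "real \<Rightarrow> real" and \<epsilon> :: real and N :: nat
  assumes mono: "mono_on {0..1} \<phi>"
    and cont: "continuous_on {0..1} \<phi>"
    and range: "\<phi> ` {0..1} \<subseteq> {0..1}"
    and above: "\<forall>x\<in>{0<..<1}. \<phi> x > x"
    and pos0: "\<phi> 0 > 0"
    and eps: "0 < \<epsilon>" "\<epsilon> < 1" "\<phi> (1 - \<epsilon>) = 1"
    and N1: "\<forall>x\<in>{0..1}. (\<phi> ^^ N) x = 1"
    and N2: "\<exists>x0\<in>{0..<1}. (\<phi> ^^ (N - 1)) x0 \<noteq> 1"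
  shows "\<exists>lam :: nat \<Rightarrow> complex.
           (\<forall>n\<in>{1..N}. lam n \<noteq> 0) \<and>
           point_spectrum \<phi> = insert 0 (lam ` {1..N}) \<and>
           (\<forall>\<mu>. \<mu> \<noteq> 0 \<longrightarrow> has_alg_mult \<phi> \<mu> (card {n\<in>{1..N}. lam n = \<mu>})) \<and>
           (\<Sum>n=1..N. lam n) = 1"
proof -
  interpret V: volterra_setting \<phi> \<epsilon> N
    by (rule volterra_setting.intro) (fact mono cont range above pos0 eps N1 N2)+
  obtain as where as: "length as = N" "sum_list as = mat_trace (coeff_mat \<phi> N)"
    "\<And>\<mu> k. kernel_dim (V.M_char \<mu> ^\<^sub>m k) \<le> length (filter ((=) \<mu>) as)"
    "\<And>\<mu>. kernel_dim (V.M_char \<mu> ^\<^sub>m N) = length (filter ((=) \<mu>) as)"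
    "\<And>\<mu>. \<mu> \<in> set as \<longleftrightarrow> 1 \<le> kernel_dim (V.M_char \<mu> ^\<^sub>m 1)"
    using jordan_eigenvalue_list[OF coeff_mat_carrier] by blast
  have as_nonzero: "\<mu> \<in> set as \<Longrightarrow> \<mu> \<noteq> 0" for \<mu>
    using as(5) V.kernel_dim_M_char_0 by auto
  have "point_spectrum \<phi> = insert 0 (set as)"
    using V.zero_in_point_spectrum V.point_spectrum_iff_kernel as(5) as_nonzero by blast
  moreover have "has_alg_mult \<phi> \<mu> (length (filter ((=) \<mu>) as))" if "\<mu> \<noteq> 0" for \<mu>
    using V.has_alg_mult_if_kernel_dims[OF that as(3) as(4)] .
  moreover have "sum_list as = 1" using as(2) V.mat_trace_coeff_mat by simp
  moreover have "as ! (n - 1) \<in> set as" if "n \<in> {1..N}" for n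
  proof -
    have "as ! (n - 1) \<in> (\<lambda>i. as ! (i - 1)) ` {1..N}" using that by blast
    then show ?thesis by (simp only: image_nth_pred[OF as(1)])
  qed
  ultimately show ?thesis
    using as_nonzero image_nth_pred[OF as(1)] card_nth_pred_eq[OF as(1)] sum_nth_pred[OF as(1)]
    by (intro exI[of _ "\<lambda>n. as ! (n - 1)"]) auto
qed

end
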